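(* Let $V$ be a real vector space of dimension $2n$ and $F=(0=V_0\subset V_1\subset\dots\subset V_{2n}=V)$ a full flag with $\dim V_j=j$. Let $\Omega(F)$ be the space of symplectic forms $\omega$ on $V$ such that $V_j$ is $\omega$-isotropic for $j\le n$, $V_j$ is $\omega$-coisotropic for $j\ge n$, and $V_j^{\perp_\omega}=V_{2n-j}$ for $j\le n$. For $\omega\in\Omega(F)$ and $0\le j\le n-1$, $\omega$ induces a symplectic form on the quotient $V_{2n-j}/V_j$, hence an orientation of it. Then the map sending $\omega$ to this $n$-tuple of orientations induces a bijection between the set of connected components of $\Omega(F)$ and the set of all $n$-tuples of orientations of the spaces $V_{2n-j}/V_j$, $j=0,\dots,n-1$ (every tuple occurs), and each connected component of $\Omega(F)$ is convex. *)

theory Defs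
  imports "HOL-Analysis.Analysis"
begin

text \<open>Real bilinear forms on a finite-dimensional real vector space 'v are
modelled as functions 'v \<Rightarrow> 'v \<Rightarrow> real (with the product/pointwise topology
of the function space, which on bilinear forms agrees with the usual
finite-dimensional topology).\<close>

definition symplectic_form :: "('v::euclidean_space \<Rightarrow> 'v \<Rightarrow> real) \<Rightarrow> bool" where
  "symplectic_form \<omega> \<longleftrightarrow> bilinear \<omega> \<and> (\<forall>v. \<omega> v v = 0)
     \<and> (\<forall>v. (\<forall>w. \<omega> v w = 0) \<longrightarrow> v = 0)"

definition sorth :: "('v \<Rightarrow> 'v \<Rightarrow> real) \<Rightarrow> 'v set \<Rightarrow> 'v set" where
  "sorth \<omega> W = {v. \<forall>w\<in>W. \<omega> v w = 0}"

definition isotropic :: "('v \<Rightarrow> 'v \<Rightarrow> real) \<Rightarrow> 'v set \<Rightarrow> bool" where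
  "isotropic \<omega> W \<longleftrightarrow> W \<subseteq> sorth \<omega> W"

definition coisotropic :: "('v \<Rightarrow> 'v \<Rightarrow> real) \<Rightarrow> 'v set \<Rightarrow> bool" where
  "coisotropic \<omega> W \<longleftrightarrow> sorth \<omega> W \<subseteq> W"

definition full_flag :: "nat \<Rightarrow> (nat \<Rightarrow> 'v::euclidean_space set) \<Rightarrow> bool" where
  "full_flag n F \<longleftrightarrow> (\<forall>j\<le>2*n. subspace (F j) \<and> dim (F j) = j)
     \<and> (\<forall>j<2*n. F j \<subseteq> F (Suc j)) \<and> F 0 = {0} \<and> F (2*n) = UNIV"

definition OmegaF :: "nat \<Rightarrow> (nat \<Rightarrow> 'v::euclidean_space set) \<Rightarrow> ('v \<Rightarrow> 'v \<Rightarrow> real) set" where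
  "OmegaF n F = {\<omega>. symplectic_form \<omega>
     \<and> (\<forall>j\<le>n. isotropic \<omega> (F j))
     \<and> (\<forall>j. n \<le> j \<and> j \<le> 2*n \<longrightarrow> coisotropic \<omega> (F j))
     \<and> (\<forall>j\<le>n. sorth \<omega> (F j) = F (2*n - j))}"

text \<open>Ordered bases of the quotient A/B (B \<subseteq> A subspaces), represented by lists of
vectors of A whose images in A/B form a basis.\<close>
definition qbasis :: "'v::euclidean_space set \<Rightarrow> 'v set \<Rightarrow> 'v list \<Rightarrow> bool" where
  "qbasis A B bs \<longleftrightarrow> length bs = dim A - dim B \<and> set bs \<subseteq> A
     \<and> (\<forall>c. (\<Sum>i<length bs. c i *\<^sub>R bs ! i) \<in> B \<longrightarrow> (\<forall>i<length bs. c i = 0))"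

definition ldet :: "nat \<Rightarrow> (nat \<Rightarrow> nat \<Rightarrow> real) \<Rightarrow> real" where
  "ldet d M = (\<Sum>p | p permutes {..<d}. of_int (sign p) * (\<Prod>i<d. M i (p i)))"

definition same_orient :: "'v::euclidean_space set \<Rightarrow> 'v set \<Rightarrow> 'v list \<Rightarrow> 'v list \<Rightarrow> bool" where
  "same_orient A B bs cs \<longleftrightarrow> qbasis A B bs \<and> qbasis A B cs \<and>
     (\<exists>M. (\<forall>i<length cs. cs ! i - (\<Sum>j<length bs. M i j *\<^sub>R bs ! j) \<in> B)
          \<and> ldet (length bs) M > 0)"

definition orientations :: "'v::euclidean_space set \<Rightarrow> 'v set \<Rightarrow> 'v list set set" where
  "orientations A B = {{cs. same_orient A B bs cs} | bs. qbasis A B bs}"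

text \<open>Symplectic ordered basis (e_1, f_1, ..., e_k, f_k) of A/B for the form induced by
\<omega>: \<omega>(e_i,f_i) = 1, all other pairings (with i \<le> j order) zero.\<close>
definition sympl_qbasis :: "('v \<Rightarrow> 'v \<Rightarrow> real) \<Rightarrow> 'v::euclidean_space set \<Rightarrow> 'v set \<Rightarrow> 'v list \<Rightarrow> bool" where
  "sympl_qbasis \<omega> A B cs \<longleftrightarrow> qbasis A B cs \<and>
     (\<forall>i<length cs. \<forall>j<length cs.
        \<omega> (cs ! i) (cs ! j) =
          (if even i \<and> j = Suc i then 1 else if even j \<and> i = Suc j then -1 else 0))"

text \<open>The orientation of A/B induced by the symplectic form induced by \<omega>
(the orientation of \<omega>^k, i.e. of a symplectic basis).\<close>
definition induced_orient :: "('v \<Rightarrow> 'v \<Rightarrow> real) \<Rightarrow> 'v::euclidean_space set \<Rightarrow> 'v set \<Rightarrow> 'v list set" where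
  "induced_orient \<omega> A B = {bs. \<exists>cs. sympl_qbasis \<omega> A B cs \<and> same_orient A B cs bs}"

definition convex_forms :: "('v \<Rightarrow> 'v \<Rightarrow> real) set \<Rightarrow> bool" where
  "convex_forms C \<longleftrightarrow> (\<forall>x\<in>C. \<forall>y\<in>C. \<forall>t::real. 0 \<le> t \<and> t \<le> 1 \<longrightarrow>
      (\<lambda>u v. t * x u v + (1 - t) * y u v) \<in> C)"

end

(*
  Choose an orthonormal basis e 0, ..., e (2n-1) adapted to the flag, so that F j is
  spanned by e 0, ..., e (j-1).  The conditions defining \<Omega>(F) say exactly that the
  Gram matrix \<omega>(e a, e b) vanishes above the antidiagonal (a + b < 2n - 1) and has
  nonzero antidiagonal entries \<omega>(e a, e (2n-1-a)).  Hence the signs of the antidiagonal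
  entries with a < n are locally constant on \<Omega>(F), while each set of forms with
  prescribed signs is convex: these sign classes are the connected components.

  On F(2n-j)/F(j), symplectic Gram-Schmidt applied to e j, e (2n-1-j), e (j+1), ...
  yields a symplectic basis whose transition matrix is triangular with determinant
  the product over l of 1/\<omega>(e (j+l), e (2n-1-j-l)).  By the transformation law of
  the Pfaffian all symplectic bases have the same transition determinant, so the
  induced orientation is given by the sign of the product of the antidiagonal entries
  with index at least j.  These partial products and the individual signs determine each
  other, and every sign pattern is realised by an explicit form.
*)
theory Submission
  imports Defs "Jordan_Normal_Form.Determinant"
begin

section \<open>Determinants and Pfaffians\<close>

lemma ldet_eq_det: "ldet d A = Determinant.det (Matrix.mat d d (\<lambda>(i,k). A i k))"
  unfolding ldet_def Determinant.det_def by (simp add: atLeast0LessThan)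

lemma ldet_cong:
  assumes "\<And>i k. i < d \<Longrightarrow> k < d \<Longrightarrow> A i k = B i k"
  shows "ldet d A = ldet d B"
  unfolding ldet_eq_det by (rule arg_cong[where f = Determinant.det]) (auto intro!: eq_matI simp: assms)

lemma ldet_mult: "ldet d (\<lambda>i k. \<Sum>l<d. A i l * B l k) = ldet d A * ldet d B"
proof -
  let ?A = "Matrix.mat d d (\<lambda>(i,k). A i k)" and ?B = "Matrix.mat d d (\<lambda>(i,k). B i k)"
  have "Matrix.mat d d (\<lambda>(i,k). \<Sum>l<d. A i l * B l k) = ?A * ?B"
    by (rule eq_matI) (auto simp: scalar_prod_def atLeast0LessThan intro!: sum.cong)
  then show ?thesis unfolding ldet_eq_det using det_mult[of ?A d ?B] by simp
qed

lemma ldet_transpose: "ldet d (\<lambda>i k. A k i) = ldet d A"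
proof -
  have "Matrix.mat d d (\<lambda>(i,k). A k i) = transpose_mat (Matrix.mat d d (\<lambda>(i,k). A i k))"
    by (rule eq_matI) auto
  then show ?thesis unfolding ldet_eq_det by (simp add: det_transpose[of _ d])
qed

lemma ldet_permute_rows:
  assumes p: "p permutes {..<d}"
  shows "ldet d (\<lambda>i. A (p i)) = of_int (sign p) * ldet d A"
proof -
  let ?A = "Matrix.mat d d (\<lambda>(i,k). A i k)"
  have "Matrix.mat d d (\<lambda>(i,k). A (p i) k) = Matrix.mat d d (\<lambda>(i,k). ?A $$ (p i, k))"
    using permutes_in_image[OF p] by (intro eq_matI) auto
  then show ?thesis
    unfolding ldet_eq_det using det_permute_rows[of ?A d p] p by (simp add: atLeast0LessThan)
qed

lemma ldet_identical_rows:
  assumes "i < d" "k < d" "i \<noteq> k" "\<And>l. l < d \<Longrightarrow> A i l = A k l"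
  shows "ldet d A = 0"
  unfolding ldet_eq_det
  by (rule det_identical_rows[of _ d i k]) (use assms in \<open>auto intro!: eq_vecI\<close>)

lemma ldet_lower_triangular:
  assumes "\<And>i k. i < k \<Longrightarrow> k < d \<Longrightarrow> A i k = 0"
  shows "ldet d A = (\<Prod>i<d. A i i)"
  unfolding ldet_eq_det
  by (subst det_lower_triangular[of d]) (auto simp: assms prod_list_diag_prod atLeast0LessThan)

lemma ldet_ne_0_iff:
  "ldet d A \<noteq> 0 \<longleftrightarrow> (\<forall>c. (\<forall>k<d. (\<Sum>i<d. c i * A i k) = 0) \<longrightarrow> (\<forall>i<d. c i = 0))"
proof -
  let ?T = "transpose_mat (Matrix.mat d d (\<lambda>(i,k). A i k))"
  have T: "?T \<in> carrier_mat d d" by simp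
  have det_T: "ldet d A = Determinant.det ?T"
    unfolding ldet_eq_det by (simp add: det_transpose[of _ d])
  have mult_T: "?T *\<^sub>v v = vec d (\<lambda>k. \<Sum>i<d. v $ i * A i k)" if "v \<in> carrier_vec d" for v
    using that by (intro eq_vecI) (auto simp: scalar_prod_def atLeast0LessThan mult.commute intro!: sum.cong)
  have kernel: "(\<exists>v. v \<in> carrier_vec d \<and> v \<noteq> 0\<^sub>v d \<and> ?T *\<^sub>v v = 0\<^sub>v d)
      \<longleftrightarrow> (\<exists>c. (\<forall>k<d. (\<Sum>i<d. c i * A i k) = 0) \<and> (\<exists>i<d. c i \<noteq> 0))"
  proof
    assume "\<exists>v. v \<in> carrier_vec d \<and> v \<noteq> 0\<^sub>v d \<and> ?T *\<^sub>v v = 0\<^sub>v d"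
    then obtain v where v: "v \<in> carrier_vec d" "v \<noteq> 0\<^sub>v d" "?T *\<^sub>v v = 0\<^sub>v d" by blast
    have "(\<Sum>i<d. v $ i * A i k) = 0" if "k < d" for k
    proof -
      have "(?T *\<^sub>v v) $ k = 0" using v(3) that by simp
      then show ?thesis using mult_T[OF v(1)] that by simp
    qed
    moreover have "\<exists>i<d. v $ i \<noteq> 0"
    proof (rule ccontr)
      assume "\<not> (\<exists>i<d. v $ i \<noteq> 0)"
      then have "v = 0\<^sub>v d" using v(1) by (intro eq_vecI) auto
      with v(2) show False by simp
    qed
    ultimately show "\<exists>c. (\<forall>k<d. (\<Sum>i<d. c i * A i k) = 0) \<and> (\<exists>i<d. c i \<noteq> 0)" by blast
  next
    assume "\<exists>c. (\<forall>k<d. (\<Sum>i<d. c i * A i k) = 0) \<and> (\<exists>i<d. c i \<noteq> 0)"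
    then obtain c i where c: "\<forall>k<d. (\<Sum>i<d. c i * A i k) = 0" "i < d" "c i \<noteq> 0" by blast
    have "vec d c \<noteq> 0\<^sub>v d" using c(2,3) by (metis index_vec index_zero_vec(1))
    moreover have "?T *\<^sub>v vec d c = 0\<^sub>v d"
      by (subst mult_T) (auto intro!: eq_vecI simp: c(1))
    ultimately show "\<exists>v. v \<in> carrier_vec d \<and> v \<noteq> 0\<^sub>v d \<and> ?T *\<^sub>v v = 0\<^sub>v d"
      by (intro exI[of _ "vec d c"]) simp
  qed
  show ?thesis
    unfolding det_T det_0_iff_vec_prod_zero_field[OF T, THEN Not_eq_iff[THEN iffD2]] kernel by blast
qed

lemma ldet_left_inverse:
  assumes "ldet d A \<noteq> 0"
  obtains B where "\<And>i k. i < d \<Longrightarrow> k < d \<Longrightarrow> (\<Sum>l<d. B i l * A l k) = (if i = k then 1 else 0)"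
proof -
  let ?A = "Matrix.mat d d (\<lambda>(i,k). A i k)"
  let ?D = "Determinant.det ?A"
  have D: "?D \<noteq> 0" using assms unfolding ldet_eq_det by simp
  have adj: "adj_mat ?A * ?A = ?D \<cdot>\<^sub>m 1\<^sub>m d" "adj_mat ?A \<in> carrier_mat d d"
    using adj_mat[of ?A d] by auto
  have "(\<Sum>l<d. adj_mat ?A $$ (i,l) / ?D * A l k) = (if i = k then 1 else 0)" if "i < d" "k < d" for i k
  proof -
    have "(adj_mat ?A * ?A) $$ (i,k) = (\<Sum>l<d. adj_mat ?A $$ (i,l) * A l k)"
      using adj(2) that by (auto simp: scalar_prod_def atLeast0LessThan intro!: sum.cong)
    then have "(\<Sum>l<d. adj_mat ?A $$ (i,l) * A l k) = ?D * (if i = k then 1 else 0)"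
      using adj(1) that by simp
    then show ?thesis using D by (simp add: sum_divide_distrib[symmetric])
  qed
  then show ?thesis by (rule that)
qed

lemma ldet_right_factor:
  assumes B: "ldet d B \<noteq> 0"
  obtains M where "\<And>i k. i < d \<Longrightarrow> k < d \<Longrightarrow> C i k = (\<Sum>l<d. M i l * B l k)"
    and "ldet d C = ldet d M * ldet d B"
proof -
  obtain Inv where Inv: "\<And>i k. i < d \<Longrightarrow> k < d \<Longrightarrow> (\<Sum>l<d. Inv i l * B l k) = (if i = k then 1 else 0)"
    using ldet_left_inverse[OF B] by blast
  define M where "M i k = (\<Sum>l<d. C i l * Inv l k)" for i k
  have factor: "C i k = (\<Sum>l<d. M i l * B l k)" if "i < d" "k < d" for i k
  proof -
    have "(\<Sum>l<d. M i l * B l k) = (\<Sum>l<d. \<Sum>l'<d. C i l' * Inv l' l * B l k)"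
      unfolding M_def by (simp add: sum_distrib_right)
    also have "\<dots> = (\<Sum>l'<d. C i l' * (\<Sum>l<d. Inv l' l * B l k))"
      by (subst sum.swap) (simp add: sum_distrib_left mult.assoc)
    also have "\<dots> = (\<Sum>l'<d. C i l' * (if l' = k then 1 else 0))"
      using Inv that by (intro sum.cong refl) auto
    also have "\<dots> = C i k" using that by (simp add: if_distrib cong: if_cong)
    finally show ?thesis by simp
  qed
  have "ldet d C = ldet d (\<lambda>i k. \<Sum>l<d. M i l * B l k)" by (rule ldet_cong) (simp add: factor)
  also have "\<dots> = ldet d M * ldet d B" by (rule ldet_mult)
  finally show ?thesis using factor that by blast
qed

definition pfaffian :: "nat \<Rightarrow> (nat \<Rightarrow> nat \<Rightarrow> real) \<Rightarrow> real" where
  "pfaffian m G = (\<Sum>p | p permutes {..<2*m}. of_int (sign p) * (\<Prod>i<m. G (p (2*i)) (p (2*i+1))))"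

lemma pfaffian_cong:
  assumes "\<And>a b. a < 2*m \<Longrightarrow> b < 2*m \<Longrightarrow> A a b = B a b"
  shows "pfaffian m A = pfaffian m B"
  unfolding pfaffian_def
proof (intro sum.cong refl arg_cong2[where f = "(*)"] prod.cong)
  fix p i assume "p \<in> {p. p permutes {..<2*m}}" "i \<in> {..<m}"
  then have "p (2*i) < 2*m" "p (2*i+1) < 2*m" using permutes_in_image[of p "{..<2*m}"] by auto
  then show "A (p (2*i)) (p (2*i+1)) = B (p (2*i)) (p (2*i+1))" using assms by auto
qed

lemma prod_lessThan_double: "(\<Prod>x<2*(m::nat). f x) = (\<Prod>i<m. f (2*i) * f (2*i+1))"
  by (induction m) (auto simp: mult_ac)

lemma prod_double_sum_PiE:
  fixes f :: "nat \<Rightarrow> 'a \<Rightarrow> 'a \<Rightarrow> 'b::comm_semiring_1"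
  assumes "finite S"
  shows "(\<Prod>i<m. \<Sum>k\<in>S. \<Sum>l\<in>S. f i k l)
       = (\<Sum>g\<in>{..<2*m} \<rightarrow>\<^sub>E S. \<Prod>i<m. f i (g (2*i)) (g (2*i+1)))"
proof -
  have "(\<Prod>i<m. \<Sum>k\<in>S. \<Sum>l\<in>S. f i k l) = (\<Prod>i<m. \<Sum>kl\<in>S\<times>S. f i (fst kl) (snd kl))"
    by (simp add: sum.cartesian_product split_def)
  also have "\<dots> = (\<Sum>q\<in>{..<m} \<rightarrow>\<^sub>E S\<times>S. \<Prod>i<m. f i (fst (q i)) (snd (q i)))"
    by (rule prod_sum_PiE) (use assms in auto)
  also have "\<dots> = (\<Sum>g\<in>{..<2*m} \<rightarrow>\<^sub>E S. \<Prod>i<m. f i (g (2*i)) (g (2*i+1)))"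
  proof (rule sum.reindex_bij_witness[where i = "\<lambda>g. \<lambda>i\<in>{..<m}. (g (2*i), g (2*i+1))"
        and j = "\<lambda>q. \<lambda>x\<in>{..<2*m}. (if even x then fst else snd) (q (x div 2))"])
    fix g assume g: "g \<in> {..<2*m} \<rightarrow>\<^sub>E S"
    show "(\<lambda>x\<in>{..<2*m}. (if even x then fst else snd) ((\<lambda>i\<in>{..<m}. (g (2*i), g (2*i+1))) (x div 2))) = g"
    proof
      fix x show "(\<lambda>x\<in>{..<2*m}. (if even x then fst else snd) ((\<lambda>i\<in>{..<m}. (g (2*i), g (2*i+1))) (x div 2))) x = g x"
        using PiE_arb[OF g, of x] by (cases "x < 2*m"; cases "even x") (auto elim!: evenE oddE)
    qed
    show "(\<lambda>i\<in>{..<m}. (g (2*i), g (2*i+1))) \<in> {..<m} \<rightarrow>\<^sub>E S\<times>S"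
      by (simp add: restrict_PiE_iff PiE_mem[OF g])
  next
    fix q assume q: "q \<in> {..<m} \<rightarrow>\<^sub>E S\<times>S"
    show "(\<lambda>i\<in>{..<m}. ((\<lambda>x\<in>{..<2*m}. (if even x then fst else snd) (q (x div 2))) (2*i),
            (\<lambda>x\<in>{..<2*m}. (if even x then fst else snd) (q (x div 2))) (2*i+1))) = q"
      by (rule ext) (use PiE_arb[OF q] in auto)
    have "q (x div 2) \<in> S\<times>S" if "x < 2*m" for x using PiE_mem[OF q, of "x div 2"] that by simp
    then show "(\<lambda>x\<in>{..<2*m}. (if even x then fst else snd) (q (x div 2))) \<in> {..<2*m} \<rightarrow>\<^sub>E S"
      by (auto simp: mem_Times_iff)
    show "(\<Prod>i<m. f i ((\<lambda>x\<in>{..<2*m}. (if even x then fst else snd) (q (x div 2))) (2*i))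
            ((\<lambda>x\<in>{..<2*m}. (if even x then fst else snd) (q (x div 2))) (2*i+1)))
        = (\<Prod>i<m. f i (fst (q i)) (snd (q i)))"
      by (intro prod.cong) auto
  qed
  finally show ?thesis .
qed

lemma bij_betw_restrict_permutes:
  assumes "finite S"
  shows "bij_betw (\<lambda>p. restrict p S) {p. p permutes S} {g \<in> S \<rightarrow>\<^sub>E S. inj_on g S}"
proof (rule bij_betw_byWitness[where f' = "\<lambda>g x. if x \<in> S then g x else x"])
  show "\<forall>p\<in>{p. p permutes S}. (\<lambda>x. if x \<in> S then restrict p S x else x) = p"
    by (auto simp: fun_eq_iff permutes_not_in)
  show "\<forall>g\<in>{g \<in> S \<rightarrow>\<^sub>E S. inj_on g S}. restrict (\<lambda>x. if x \<in> S then g x else x) S = g"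
    by (auto simp: fun_eq_iff PiE_def extensional_def)
  show "(\<lambda>p. restrict p S) ` {p. p permutes S} \<subseteq> {g \<in> S \<rightarrow>\<^sub>E S. inj_on g S}"
    by (auto simp: permutes_in_image permutes_inj_on)
  show "(\<lambda>g x. if x \<in> S then g x else x) ` {g \<in> S \<rightarrow>\<^sub>E S. inj_on g S} \<subseteq> {p. p permutes S}"
  proof clarify
    fix g assume g: "g \<in> S \<rightarrow>\<^sub>E S" "inj_on g S"
    have "g ` S = S" using endo_inj_surj[OF assms _ g(2)] g(1) by auto
    then have "bij_betw (\<lambda>x. if x \<in> S then g x else x) S S"
      using g(2) by (auto simp: bij_betw_def inj_on_def)
    then show "(\<lambda>x. if x \<in> S then g x else x) permutes S" by (rule bij_imp_permutes) simp
  qed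
qed

text \<open>The sum over permutations runs over all orderings of the pairs; so this is
  \<open>2\<^sup>m m!\<close> times the usual Pfaffian, which is harmless since only its transformation
  law and its sign at the standard symplectic matrix are used.\<close>

lemma pfaffian_congruence:
  "pfaffian m (\<lambda>a b. \<Sum>k<2*m. \<Sum>l<2*m. M a k * M b l * G k l) = ldet (2*m) M * pfaffian m G"
proof -
  define d where "d = 2*m"
  define pairs where "pairs g = (\<Prod>i<m. G (g (2*i)) (g (2*i+1)))" for g :: "nat \<Rightarrow> nat"
  let ?P = "{p. p permutes {..<d}}"
  let ?E = "{..<d} \<rightarrow>\<^sub>E {..<d}"
  have expand: "(\<Prod>i<m. \<Sum>k<d. \<Sum>l<d. M (p (2*i)) k * M (p (2*i+1)) l * G k l)
      = (\<Sum>g\<in>?E. (\<Prod>x<d. M (p x) (g x)) * pairs g)" for p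
  proof -
    have "(\<Prod>i<m. \<Sum>k<d. \<Sum>l<d. M (p (2*i)) k * M (p (2*i+1)) l * G k l)
        = (\<Sum>g\<in>?E. \<Prod>i<m. M (p (2*i)) (g (2*i)) * M (p (2*i+1)) (g (2*i+1)) * G (g (2*i)) (g (2*i+1)))"
      unfolding d_def by (rule prod_double_sum_PiE) simp
    also have "\<dots> = (\<Sum>g\<in>?E. (\<Prod>x<d. M (p x) (g x)) * pairs g)"
      unfolding d_def pairs_def prod_lessThan_double by (simp add: prod.distrib)
    finally show ?thesis .
  qed
  have "pfaffian m (\<lambda>a b. \<Sum>k<2*m. \<Sum>l<2*m. M a k * M b l * G k l)
      = (\<Sum>p\<in>?P. \<Sum>g\<in>?E. pairs g * (of_int (sign p) * (\<Prod>x<d. M (p x) (g x))))"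
    unfolding pfaffian_def d_def[symmetric] expand by (simp add: sum_distrib_left mult_ac)
  also have "\<dots> = (\<Sum>g\<in>?E. pairs g * ldet d (\<lambda>x y. M y (g x)))"
    unfolding ldet_def by (subst sum.swap) (simp add: sum_distrib_left)
  also have "\<dots> = (\<Sum>g\<in>{g\<in>?E. inj_on g {..<d}}. pairs g * ldet d (\<lambda>x y. M y (g x)))"
  proof (rule sum.mono_neutral_right)
    show "\<forall>g\<in>?E - {g\<in>?E. inj_on g {..<d}}. pairs g * ldet d (\<lambda>x y. M y (g x)) = 0"
    proof
      fix g assume "g \<in> ?E - {g\<in>?E. inj_on g {..<d}}"
      then obtain x x' where "x < d" "x' < d" "x \<noteq> x'" "g x = g x'" by (auto simp: inj_on_def)
      then show "pairs g * ldet d (\<lambda>x y. M y (g x)) = 0" by (simp add: ldet_identical_rows)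
    qed
  qed (auto simp: finite_PiE)
  also have "\<dots> = (\<Sum>p\<in>?P. pairs (restrict p {..<d}) * ldet d (\<lambda>x y. M y (restrict p {..<d} x)))"
    by (rule sum.reindex_bij_betw[OF bij_betw_restrict_permutes, symmetric]) simp
  also have "\<dots> = (\<Sum>p\<in>?P. pairs p * (of_int (sign p) * ldet d M))"
  proof (rule sum.cong)
    fix p assume "p \<in> ?P"
    then have p: "p permutes {..<d}" by simp
    have "pairs (restrict p {..<d}) = pairs p" unfolding pairs_def d_def by (intro prod.cong) auto
    moreover have "ldet d (\<lambda>x y. M y (restrict p {..<d} x)) = ldet d (\<lambda>x y. M y (p x))"
      by (rule ldet_cong) simp
    moreover have "ldet d (\<lambda>x y. M y (p x)) = of_int (sign p) * ldet d M"
      using ldet_permute_rows[OF p, of "\<lambda>x y. M y x"] ldet_transpose[of d M] by simp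
    ultimately show "pairs (restrict p {..<d}) * ldet d (\<lambda>x y. M y (restrict p {..<d} x))
        = pairs p * (of_int (sign p) * ldet d M)" by simp
  qed simp
  also have "\<dots> = ldet d M * pfaffian m G"
    unfolding pfaffian_def d_def pairs_def by (simp add: sum_distrib_left mult_ac)
  finally show ?thesis unfolding d_def .
qed

definition sympl_std :: "nat \<Rightarrow> nat \<Rightarrow> real" where
  "sympl_std a b = (if even a \<and> b = Suc a then 1 else if even b \<and> a = Suc b then -1 else 0)"

lemma sympl_std_eq_blocks:
  "sympl_std a b = (if a div 2 = b div 2 \<and> a \<noteq> b then (if even a then 1 else -1) else 0)"
  unfolding sympl_std_def by (auto elim!: evenE oddE; presburger)

lemma sympl_std_even: "sympl_std (2*l) k = (if k = 2*l+1 then 1 else 0)"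
  unfolding sympl_std_def by (auto; presburger)

lemma sympl_std_odd: "sympl_std (Suc (2*l)) k = (if k = 2*l then -1 else 0)"
  unfolding sympl_std_def by auto

lemma sympl_std_swap_blocks:
  fixes b c :: nat
  defines "\<beta> \<equiv> Transposition.transpose (2*b) (2*c) \<circ> Transposition.transpose (2*b+1) (2*c+1)"
  shows "sympl_std (\<beta> x) (\<beta> y) = sympl_std x y" and "sign \<beta> = 1"
proof -
  have div: "\<beta> x div 2 = (if x div 2 = b then c else if x div 2 = c then b else x div 2)" for x
    unfolding \<beta>_def Transposition.transpose_def by auto
  have "even (\<beta> x) = even x" for x
    unfolding \<beta>_def Transposition.transpose_def by auto
  moreover have "(\<beta> x div 2 = \<beta> y div 2) = (x div 2 = y div 2)" unfolding div by auto
  moreover have "inj \<beta>" unfolding \<beta>_def by (simp add: inj_compose inj_transpose)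
  then have "(\<beta> x = \<beta> y) = (x = y)" by (simp add: inj_eq)
  ultimately show "sympl_std (\<beta> x) (\<beta> y) = sympl_std x y" unfolding sympl_std_eq_blocks by simp
  show "sign \<beta> = 1"
    unfolding \<beta>_def by (simp add: sign_compose permutation_swap_id sign_swap_id)
qed

lemma sympl_std_term_move_block:
  assumes p: "p permutes {..<2*Suc m}"
    and nz: "sympl_std (p (2*m)) (p (2*m+1)) \<noteq> 0"
  obtains p1 where "p1 permutes {..<2*Suc m}"
    and "p1 (2*m) = 2*m \<and> p1 (2*m+1) = 2*m+1 \<or> p1 (2*m) = 2*m+1 \<and> p1 (2*m+1) = 2*m"
    and "of_int (sign p1) * (\<Prod>i<Suc m. sympl_std (p1 (2*i)) (p1 (2*i+1)))
       = of_int (sign p) * (\<Prod>i<Suc m. sympl_std (p (2*i)) (p (2*i+1)))"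
proof -
  define b where "b = p (2*m) div 2"
  have b: "b \<le> m" using permutes_in_image[OF p, of "2*m"] unfolding b_def by auto
  define \<beta> where "\<beta> = Transposition.transpose (2*b) (2*m) \<circ> Transposition.transpose (2*b+1) (2*m+1)"
  have \<beta>: "\<beta> permutes {..<2*Suc m}"
    unfolding \<beta>_def using b by (auto intro!: permutes_compose permutes_swap_id)
  have \<beta>_sign: "sign \<beta> = 1" and \<beta>_std: "\<And>x y. sympl_std (\<beta> x) (\<beta> y) = sympl_std x y"
    unfolding \<beta>_def by (rule sympl_std_swap_blocks)+
  have "sign (\<beta> \<circ> p) = sign \<beta> * sign p"
    using sign_compose[OF permutes_imp_permutation[OF _ \<beta>] permutes_imp_permutation[OF _ p]] by simp
  then have same_term: "of_int (sign (\<beta> \<circ> p)) * (\<Prod>i<Suc m. sympl_std ((\<beta> \<circ> p) (2*i)) ((\<beta> \<circ> p) (2*i+1)))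
      = of_int (sign p) * (\<Prod>i<Suc m. sympl_std (p (2*i)) (p (2*i+1)))"
    by (simp add: \<beta>_sign \<beta>_std)
  have "(\<beta> \<circ> p) (2*m) div 2 = m"
    unfolding \<beta>_def b_def Transposition.transpose_def by auto
  moreover have "sympl_std ((\<beta> \<circ> p) (2*m)) ((\<beta> \<circ> p) (2*m+1)) \<noteq> 0"
    using nz by (simp add: \<beta>_std)
  ultimately have block: "(\<beta> \<circ> p) (2*m) = 2*m \<and> (\<beta> \<circ> p) (2*m+1) = 2*m+1
      \<or> (\<beta> \<circ> p) (2*m) = 2*m+1 \<and> (\<beta> \<circ> p) (2*m+1) = 2*m"
    unfolding sympl_std_eq_blocks by (auto split: if_splits; presburger)
  show ?thesis by (rule that[OF permutes_compose[OF p \<beta>] block same_term])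
qed

lemma sympl_std_term_reduce:
  assumes p: "p permutes {..<2*Suc m}"
    and nz: "(\<Prod>i<Suc m. sympl_std (p (2*i)) (p (2*i+1))) \<noteq> 0"
  obtains p' where "p' permutes {..<2*m}"
    and "of_int (sign p) * (\<Prod>i<Suc m. sympl_std (p (2*i)) (p (2*i+1)))
       = of_int (sign p') * (\<Prod>i<m. sympl_std (p' (2*i)) (p' (2*i+1)))"
proof -
  let ?S = "{..<2*Suc m}"
  let ?t = "\<lambda>p. of_int (sign p) * (\<Prod>i<Suc m. sympl_std (p (2*i)) (p (2*i+1)))"
  obtain p1 where p1: "p1 permutes ?S" and t1: "?t p1 = ?t p"
    and last: "p1 (2*m) = 2*m \<and> p1 (2*m+1) = 2*m+1 \<or> p1 (2*m) = 2*m+1 \<and> p1 (2*m+1) = 2*m"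
    using sympl_std_term_move_block[OF p] nz by auto
  text \<open>Putting the last block in order flips both the sign and the last factor.\<close>
  define p2 where "p2 = (if p1 (2*m) = 2*m then id else Transposition.transpose (2*m) (2*m+1)) \<circ> p1"
  have p2: "p2 permutes ?S"
    unfolding p2_def by (rule permutes_compose[OF p1]) (auto intro!: permutes_swap_id)
  have p2_last: "p2 (2*m) = 2*m" "p2 (2*m+1) = 2*m+1" unfolding p2_def using last by auto
  have p2_front: "p2 (2*i) = p1 (2*i)" "p2 (2*i+1) = p1 (2*i+1)" if "i < m" for i
  proof -
    have "p1 (2*i) \<noteq> p1 (2*m)" "p1 (2*i) \<noteq> p1 (2*m+1)" "p1 (2*i+1) \<noteq> p1 (2*m)" "p1 (2*i+1) \<noteq> p1 (2*m+1)"
      using that by (simp_all add: inj_eq[OF permutes_inj[OF p1]])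
    then show "p2 (2*i) = p1 (2*i)" "p2 (2*i+1) = p1 (2*i+1)"
      unfolding p2_def using last by (auto simp: Transposition.transpose_def)
  qed
  have t2: "?t p2 = ?t p1"
  proof (cases "p1 (2*m) = 2*m")
    case True then show ?thesis unfolding p2_def by simp
  next
    case False
    then have "p1 (2*m) = 2*m+1" "p1 (2*m+1) = 2*m" using last by auto
    moreover have "sign p2 = - sign p1"
      unfolding p2_def using False sign_compose[OF permutation_swap_id permutes_imp_permutation[OF _ p1]]
      by (simp add: sign_swap_id)
    moreover have "(\<Prod>i<m. sympl_std (p2 (2*i)) (p2 (2*i+1))) = (\<Prod>i<m. sympl_std (p1 (2*i)) (p1 (2*i+1)))"
      using p2_front by (intro prod.cong) auto
    ultimately show ?thesis using p2_last by (simp add: sympl_std_even sympl_std_odd)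
  qed
  have "p2 permutes {..<2*m}"
  proof (rule permutes_superset[OF p2])
    fix x assume "x \<in> ?S - {..<2*m}"
    then have "x = 2*m \<or> x = 2*m+1" by auto
    then show "p2 x = x" using p2_last by auto
  qed
  moreover have "?t p2 = of_int (sign p2) * (\<Prod>i<m. sympl_std (p2 (2*i)) (p2 (2*i+1)))"
    using p2_last by (simp add: sympl_std_even)
  then have "?t p = of_int (sign p2) * (\<Prod>i<m. sympl_std (p2 (2*i)) (p2 (2*i+1)))"
    using t1 t2 by metis
  ultimately show ?thesis by (rule that)
qed

lemma pfaffian_sympl_std_term_nonneg:
  "p permutes {..<2*m} \<Longrightarrow> 0 \<le> of_int (sign p) * (\<Prod>i<m. sympl_std (p (2*i)) (p (2*i+1)))"
proof (induction m arbitrary: p)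
  case 0 then show ?case by (simp add: sign_id)
next
  case (Suc m)
  show ?case
  proof (cases "(\<Prod>i<Suc m. sympl_std (p (2*i)) (p (2*i+1))) = 0")
    case True
    then show ?thesis by (metis mult_zero_right order_refl)
  next
    case False
    with Suc.prems obtain p' where "p' permutes {..<2*m}"
      and "of_int (sign p) * (\<Prod>i<Suc m. sympl_std (p (2*i)) (p (2*i+1)))
         = of_int (sign p') * (\<Prod>i<m. sympl_std (p' (2*i)) (p' (2*i+1)))"
      by (rule sympl_std_term_reduce)
    with Suc.IH show ?thesis by simp
  qed
qed

lemma pfaffian_sympl_std_pos: "pfaffian m sympl_std > 0"
proof -
  let ?P = "{p. p permutes {..<2*m}}"
  let ?f = "\<lambda>p. of_int (sign p) * (\<Prod>i<m. sympl_std (p (2*i)) (p (2*i+1)))"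
  have "?f id \<le> sum ?f ?P"
  proof (rule member_le_sum)
    show "id \<in> ?P" by (simp add: permutes_id)
    show "\<And>p. p \<in> ?P - {id} \<Longrightarrow> 0 \<le> ?f p" using pfaffian_sympl_std_term_nonneg by blast
  qed (simp add: finite_permutations)
  moreover have "?f id = 1" by (simp add: sign_id sympl_std_def)
  ultimately show ?thesis unfolding pfaffian_def by simp
qed

lemma alternating_antisym:
  assumes "bilinear \<omega>" "\<And>v. \<omega> v v = 0"
  shows "\<omega> u v = - \<omega> v u"
proof -
  have "\<omega> (u+v) (u+v) = \<omega> u u + \<omega> u v + (\<omega> v u + \<omega> v v)"
    using bilinear_ladd[OF assms(1)] bilinear_radd[OF assms(1)] by simp
  then show ?thesis using assms(2) by (simp add: eq_neg_iff_add_eq_0)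
qed

lemma convex_comb_sign:
  fixes p q t :: real
  assumes "p \<noteq> 0" "q \<noteq> 0" "(0 < p) = (0 < q)" "0 \<le> t" "t \<le> 1"
  shows "t*p + (1-t)*q \<noteq> 0 \<and> (0 < t*p + (1-t)*q) = (0 < p)"
proof -
  have pos: "0 < t*p' + (1-t)*q'" if "0 < p'" "0 < q'" for p' q' :: real
  proof (cases "t = 0")
    case False
    then have "0 < t*p'" using that assms(4) by simp
    moreover have "0 \<le> (1-t)*q'" using that assms(5) by simp
    ultimately show ?thesis by simp
  qed (use that in simp)
  show ?thesis
  proof (cases "0 < p")
    case True then show ?thesis using pos[of p q] assms by auto
  next
    case False
    then have "0 < t*(-p) + (1-t)*(-q)" using pos[of "-p" "-q"] assms by simp
    then show ?thesis using False by auto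
  qed
qed

lemma continuous_on_eval_form: "continuous_on S (\<lambda>\<omega>::'a\<Rightarrow>'b\<Rightarrow>real. \<omega> u v)"
  by (intro continuous_on_product_then_coordinatewise[where f = "\<lambda>\<omega>. \<omega> u"]
      continuous_on_product_then_coordinatewise[where f = "\<lambda>\<omega>. \<omega>"] continuous_on_id)

lemma continuous_on_convex_comb_form:
  "continuous_on S (\<lambda>t. \<lambda>u v. t * x u v + (1 - t) * (y u v :: real))"
  by (intro continuous_on_coordinatewise_then_product continuous_intros)

section \<open>Symplectic Gram-Schmidt\<close>

lemma bilinear_eq_0_on_span_right:
  assumes "bilinear \<omega>" "x \<in> span S" "\<And>s. s \<in> S \<Longrightarrow> \<omega> z s = 0"
  shows "\<omega> z x = 0"
  by (rule linear_eq_0_on_span[where f = "\<omega> z"]) (use assms in \<open>auto simp: bilinear_def\<close>)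

lemma bilinear_eq_0_on_span_left:
  assumes "bilinear \<omega>" "x \<in> span S" "\<And>s. s \<in> S \<Longrightarrow> \<omega> s z = 0"
  shows "\<omega> x z = 0"
  by (rule linear_eq_0_on_span[where f = "\<lambda>x. \<omega> x z"]) (use assms in \<open>auto simp: bilinear_def\<close>)

definition sympl_proj :: "('v \<Rightarrow> 'v \<Rightarrow> real) \<Rightarrow> (nat \<Rightarrow> 'v::real_vector) \<Rightarrow> nat \<Rightarrow> 'v \<Rightarrow> 'v" where
  "sympl_proj \<omega> c p z = z - (\<Sum>l<p. \<omega> z (c (2*l+1)) *\<^sub>R c (2*l) - \<omega> z (c (2*l)) *\<^sub>R c (2*l+1))"

lemma sympl_proj_left:
  assumes "bilinear \<omega>"
  shows "\<omega> (sympl_proj \<omega> c p z) w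
    = \<omega> z w - (\<Sum>l<p. \<omega> z (c (2*l+1)) * \<omega> (c (2*l)) w - \<omega> z (c (2*l)) * \<omega> (c (2*l+1)) w)"
proof -
  interpret L: linear "\<lambda>x. \<omega> x w" using assms by (simp add: bilinear_def)
  show ?thesis unfolding sympl_proj_def by (simp add: L.diff L.sum L.scale)
qed

lemma sympl_proj_orth:
  assumes bil: "bilinear \<omega>"
    and gram: "\<And>a b. a < 2*p \<Longrightarrow> b < 2*p \<Longrightarrow> \<omega> (c a) (c b) = sympl_std a b"
    and k: "k < 2*p"
  shows "\<omega> (sympl_proj \<omega> c p z) (c k) = 0"
proof -
  have "\<omega> z (c (2*l+1)) * \<omega> (c (2*l)) (c k) - \<omega> z (c (2*l)) * \<omega> (c (2*l+1)) (c k)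
      = (if l = k div 2 then \<omega> z (c k) else 0)" if l: "l < p" for l
  proof -
    have block: "l = k div 2 \<longleftrightarrow> k = 2*l \<or> k = 2*l+1" by presburger
    have "\<omega> (c (2*l)) (c k) = sympl_std (2*l) k" "\<omega> (c (2*l+1)) (c k) = sympl_std (Suc (2*l)) k"
      using gram l k by simp_all
    then show ?thesis unfolding block by (auto simp: sympl_std_even sympl_std_odd)
  qed
  then have "(\<Sum>l<p. \<omega> z (c (2*l+1)) * \<omega> (c (2*l)) (c k) - \<omega> z (c (2*l)) * \<omega> (c (2*l+1)) (c k))
      = (\<Sum>l<p. if l = k div 2 then \<omega> z (c k) else 0)" by (intro sum.cong) auto
  also have "\<dots> = \<omega> z (c k)"
  proof -
    have "k div 2 < p" using k by presburger
    then show ?thesis by simp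
  qed
  finally show ?thesis by (simp add: sympl_proj_left[OF bil])
qed

lemma sympl_std_gram_extend:
  assumes bil: "bilinear \<omega>" and alt: "\<And>v. \<omega> v v = 0"
    and gram: "\<And>a b. a < 2*p \<Longrightarrow> b < 2*p \<Longrightarrow> \<omega> (c a) (c b) = sympl_std a b"
    and x: "\<And>k. k < 2*p \<Longrightarrow> \<omega> x (c k) = 0" and y: "\<And>k. k < 2*p \<Longrightarrow> \<omega> y (c k) = 0"
    and xy: "\<omega> x y = 1"
    and a: "a < 2*Suc p" and b: "b < 2*Suc p"
  shows "\<omega> ((c(2*p := x, 2*p+1 := y)) a) ((c(2*p := x, 2*p+1 := y)) b) = sympl_std a b"
proof -
  have anti: "\<omega> u v = - \<omega> v u" for u v by (rule alternating_antisym[OF bil alt])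
  let ?c = "c(2*p := x, 2*p+1 := y)"
  have old: "?c k = c k" if "k < 2*p" for k using that by simp
  have new: "?c k = x \<or> ?c k = y" if "2*p \<le> k" "k < 2*Suc p" for k
    using that by (cases "k = 2*p") auto
  consider "a < 2*p" "b < 2*p" | "a < 2*p" "2*p \<le> b" | "2*p \<le> a" "b < 2*p" | "2*p \<le> a" "2*p \<le> b"
    by linarith
  then show ?thesis
  proof cases
    case 1
    then show ?thesis using gram by simp
  next
    case 2
    then have "a div 2 \<noteq> b div 2" by presburger
    moreover have "\<omega> (c a) x = 0" "\<omega> (c a) y = 0"
      using anti[of "c a" x] anti[of "c a" y] x[of a] y[of a] 2 by simp_all
    ultimately show ?thesis using new[of b] old[of a] 2 b by (auto simp: sympl_std_eq_blocks)
  next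
    case 3
    then have "a div 2 \<noteq> b div 2" by presburger
    then show ?thesis using new[of a] old[of b] x[of b] y[of b] 3 a by (auto simp: sympl_std_eq_blocks)
  next
    case 4
    then have "a = 2*p \<or> a = 2*p+1" "b = 2*p \<or> b = 2*p+1" using a b by auto
    then show ?thesis using xy anti[of y x] alt[of x] alt[of y] by (auto simp: sympl_std_def)
  qed
qed

section \<open>The forms in \<open>\<Omega>(F)\<close> in an adapted basis\<close>

locale adapted_basis =
  fixes n :: nat and F :: "nat \<Rightarrow> 'v::euclidean_space set" and e :: "nat \<Rightarrow> 'v"
  assumes dim_V: "DIM('v) = 2*n" and flag: "full_flag n F"
    and e_in_flag: "\<And>a. a < 2*n \<Longrightarrow> e a \<in> F (Suc a)"
    and e_orth_flag: "\<And>a x. a < 2*n \<Longrightarrow> x \<in> F a \<Longrightarrow> e a \<bullet> x = 0"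
    and e_unit: "\<And>a. a < 2*n \<Longrightarrow> e a \<bullet> e a = 1"

lemma adapted_basis_exists:
  fixes F :: "nat \<Rightarrow> 'v::euclidean_space set"
  assumes dim: "DIM('v) = 2*n" and fl: "full_flag n F"
  obtains e where "adapted_basis n F e"
proof -
  have "\<exists>x::'v. x \<in> F (Suc a) \<and> (\<forall>y\<in>F a. x \<bullet> y = 0) \<and> x \<bullet> x = 1" if a: "a < 2*n" for a
  proof -
    have F: "subspace (F a)" "dim (F a) = a" "subspace (F (Suc a))" "dim (F (Suc a)) = Suc a"
        "F a \<subseteq> F (Suc a)"
      using fl a unfolding full_flag_def by auto
    then have "span (F a) \<subset> span (F (Suc a))"
      by (auto simp: span_eq_iff[THEN iffD2] psubset_eq)
    then obtain x where x: "x \<noteq> 0" "x \<in> span (F (Suc a))"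
        "\<And>y. y \<in> span (F a) \<Longrightarrow> real_inner_class.orthogonal x y"
      by (meson orthogonal_to_subspace_exists_gen)
    have "x \<in> F (Suc a)" using x(2) F by (simp add: span_eq_iff[THEN iffD2])
    moreover have "\<forall>y\<in>F a. x \<bullet> y = 0"
      using x(3) span_superset unfolding real_inner_class.orthogonal_def by blast
    ultimately show ?thesis
      using x(1) F(3) by (intro exI[of _ "sgn x"])
        (simp add: sgn_div_norm subspace_scale power2_norm_eq_inner[symmetric] norm_sgn)
  qed
  then obtain e :: "nat \<Rightarrow> 'v" where "\<forall>a<2*n. e a \<in> F (Suc a) \<and> (\<forall>x\<in>F a. e a \<bullet> x = 0) \<and> e a \<bullet> e a = 1"
    by metis
  then have "adapted_basis n F e" by unfold_locales (use dim fl in auto)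
  then show ?thesis by (rule that)
qed

context adapted_basis
begin

lemma flag_subspace: "j \<le> 2*n \<Longrightarrow> subspace (F j)"
  using flag unfolding full_flag_def by auto

lemma flag_dim: "j \<le> 2*n \<Longrightarrow> dim (F j) = j"
  using flag unfolding full_flag_def by auto

lemma flag_mono: "i \<le> j \<Longrightarrow> j \<le> 2*n \<Longrightarrow> F i \<subseteq> F j"
proof (induction j rule: dec_induct)
  case (step k)
  then have "F k \<subseteq> F (Suc k)" using flag unfolding full_flag_def by auto
  with step show ?case by auto
qed simp

lemma e_in_flag_le: "a < j \<Longrightarrow> j \<le> 2*n \<Longrightarrow> e a \<in> F j"
  using e_in_flag[of a] flag_mono[of "Suc a" j] by auto

lemma e_orthonormal: "a < 2*n \<Longrightarrow> b < 2*n \<Longrightarrow> e a \<bullet> e b = (if a = b then 1 else 0)"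
proof -
  have *: "e a \<bullet> e b = 0" if "a < b" "b < 2*n" for a b
    using e_orth_flag[of b "e a"] e_in_flag_le[of a b] that by (simp add: inner_commute)
  assume "a < 2*n" "b < 2*n"
  then show ?thesis using *[of a b] *[of b a] e_unit[of a]
    by (cases a b rule: linorder_cases) (auto simp: inner_commute)
qed

lemma span_e: "span (e ` {..<2*n}) = UNIV"
proof -
  let ?S = "e ` {..<2*n}"
  have "pairwise real_inner_class.orthogonal ?S"
    unfolding pairwise_def real_inner_class.orthogonal_def using e_orthonormal by fastforce
  moreover have "0 \<notin> ?S" using e_unit by fastforce
  ultimately have ind: "independent ?S" by (rule pairwise_orthogonal_independent)
  have "inj_on e {..<2*n}"
    by (rule inj_onI) (use e_orthonormal e_unit in \<open>fastforce split: if_splits\<close>)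
  then have "card ?S = 2*n" by (simp add: card_image)
  then have "dim (span ?S) = DIM('v)" using dim_span_eq_card_independent[OF ind] dim_V by simp
  then show ?thesis using dim_eq_full[of ?S] by simp
qed

lemma e_expansion: "v = (\<Sum>b<2*n. (e b \<bullet> v) *\<^sub>R e b)"
proof -
  define w where "w = v - (\<Sum>b<2*n. (e b \<bullet> v) *\<^sub>R e b)"
  have "e c \<bullet> w = 0" if "c < 2*n" for c
  proof -
    have "e c \<bullet> (\<Sum>b<2*n. (e b \<bullet> v) *\<^sub>R e b) = (\<Sum>b<2*n. (e b \<bullet> v) * (if c = b then 1 else 0))"
      using that by (simp add: inner_sum_right e_orthonormal)
    also have "\<dots> = e c \<bullet> v" using that by (simp add: if_distrib cong: if_cong)
    finally show ?thesis unfolding w_def by (simp add: inner_diff_right)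
  qed
  then have "real_inner_class.orthogonal w w"
    by (intro orthogonal_to_span[of w "e ` {..<2*n}"])
      (auto simp: span_e real_inner_class.orthogonal_def inner_commute)
  then show ?thesis unfolding w_def by (simp add: orthogonal_self)
qed

lemma flag_eq_coords_vanish: "j \<le> 2*n \<Longrightarrow> F j = {v. \<forall>b. j \<le> b \<longrightarrow> b < 2*n \<longrightarrow> e b \<bullet> v = 0}"
proof (intro equalityI subsetI CollectI allI impI)
  fix v b assume "j \<le> 2*n" "v \<in> F j" "j \<le> b" "b < 2*n"
  then show "e b \<bullet> v = 0" using flag_mono[of j b] e_orth_flag by auto
next
  fix v assume j: "j \<le> 2*n" and v: "v \<in> {v. \<forall>b. j \<le> b \<longrightarrow> b < 2*n \<longrightarrow> e b \<bullet> v = 0}"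
  have "v = (\<Sum>b<2*n. (e b \<bullet> v) *\<^sub>R e b)" by (rule e_expansion)
  also have "\<dots> = (\<Sum>b<j. (e b \<bullet> v) *\<^sub>R e b)"
    using v j by (intro sum.mono_neutral_right) auto
  also have "\<dots> \<in> F j"
    by (intro subspace_sum[OF flag_subspace[OF j]] subspace_scale[OF flag_subspace[OF j]] e_in_flag_le)
      (use j in auto)
  finally show "v \<in> F j" .
qed

lemma bilinear_expand_left:
  assumes "bilinear \<omega>"
  shows "\<omega> u v = (\<Sum>b<2*n. (e b \<bullet> u) * \<omega> (e b) v)"
proof -
  interpret linear "\<lambda>x. \<omega> x v" using assms by (simp add: bilinear_def)
  show ?thesis by (subst e_expansion[of u]) (simp add: sum scale)
qed

lemma bilinear_expand_right:
  assumes "bilinear \<omega>"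
  shows "\<omega> u v = (\<Sum>b<2*n. (e b \<bullet> v) * \<omega> u (e b))"
proof -
  interpret linear "\<lambda>x. \<omega> u x" using assms by (simp add: bilinear_def)
  show ?thesis by (subst e_expansion[of v]) (simp add: sum scale)
qed

definition antitriangular :: "('v \<Rightarrow> 'v \<Rightarrow> real) \<Rightarrow> bool" where
  "antitriangular \<omega> \<longleftrightarrow> bilinear \<omega> \<and> (\<forall>v. \<omega> v v = 0)
     \<and> (\<forall>a b. a < 2*n \<longrightarrow> b < 2*n \<longrightarrow> a + b < 2*n - 1 \<longrightarrow> \<omega> (e a) (e b) = 0)
     \<and> (\<forall>a<n. \<omega> (e a) (e (2*n - 1 - a)) \<noteq> 0)"

lemma antitriangularD:
  assumes "antitriangular \<omega>"
  shows "bilinear \<omega>" "\<And>v. \<omega> v v = 0"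
    "\<And>a b. a < 2*n \<Longrightarrow> b < 2*n \<Longrightarrow> a + b < 2*n - 1 \<Longrightarrow> \<omega> (e a) (e b) = 0"
    "\<And>a. a < n \<Longrightarrow> \<omega> (e a) (e (2*n - 1 - a)) \<noteq> 0"
  using assms unfolding antitriangular_def by blast+

lemma antitriangular_antidiag_ne_0:
  assumes \<omega>: "antitriangular \<omega>" and t: "t < 2*n"
  shows "\<omega> (e t) (e (2*n - 1 - t)) \<noteq> 0"
proof (cases "t < n")
  case False
  define s where "s = 2*n - 1 - t"
  have s: "s < n" "2*n - 1 - s = t" using False t unfolding s_def by auto
  have "\<omega> (e s) (e t) \<noteq> 0" using antitriangularD(4)[OF \<omega> s(1)] s by simp
  then show ?thesis
    using alternating_antisym[OF antitriangularD(1,2)[OF \<omega>], of "e t" "e s"] unfolding s_def by simp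
qed (use antitriangularD(4)[OF \<omega>] in blast)

text \<open>Pairing a nonzero vector with the basis vector opposite to its highest nonzero
  coordinate isolates a single antidiagonal entry.\<close>

lemma antitriangular_top_coord:
  assumes \<omega>: "antitriangular \<omega>" and v: "v \<noteq> 0"
  obtains t where "t < 2*n" "\<And>b. t < b \<Longrightarrow> b < 2*n \<Longrightarrow> e b \<bullet> v = 0"
    "\<omega> v (e (2*n - 1 - t)) \<noteq> 0"
proof -
  define B where "B = {b. b < 2*n \<and> e b \<bullet> v \<noteq> 0}"
  have "B \<noteq> {}"
  proof
    assume "B = {}"
    then have "v = 0" using e_expansion[of v] unfolding B_def by simp
    with v show False by simp
  qed
  moreover have fin: "finite B" unfolding B_def by simp
  ultimately have t: "Max B < 2*n" "e (Max B) \<bullet> v \<noteq> 0" using Max_in[of B] unfolding B_def by auto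
  have above: "e b \<bullet> v = 0" if "Max B < b" "b < 2*n" for b
    using Max_ge[OF fin, of b] that unfolding B_def by fastforce
  define s where "s = 2*n - 1 - Max B"
  have "\<omega> v (e s) = (\<Sum>b<2*n. (e b \<bullet> v) * \<omega> (e b) (e s))"
    by (rule bilinear_expand_left[OF antitriangularD(1)[OF \<omega>]])
  also have "\<dots> = (\<Sum>b\<in>{Max B}. (e b \<bullet> v) * \<omega> (e b) (e s))"
  proof (rule sum.mono_neutral_right)
    show "\<forall>b\<in>{..<2*n} - {Max B}. (e b \<bullet> v) * \<omega> (e b) (e s) = 0"
    proof
      fix b assume b: "b \<in> {..<2*n} - {Max B}"
      show "(e b \<bullet> v) * \<omega> (e b) (e s) = 0"
      proof (cases "Max B < b")
        case True then show ?thesis using above b by simp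
      next
        case False
        then have "b + s < 2*n - 1" "s < 2*n" using b t unfolding s_def by auto
        then show ?thesis using antitriangularD(3)[OF \<omega>, of b s] b by simp
      qed
    qed
  qed (use t in auto)
  finally have "\<omega> v (e s) \<noteq> 0"
    using t antitriangular_antidiag_ne_0[OF \<omega> t(1)] unfolding s_def by simp
  then show ?thesis using that t(1) above unfolding s_def by blast
qed

lemma sorth_flag_subset:
  assumes \<omega>: "antitriangular \<omega>" and j: "j \<le> 2*n"
  shows "sorth \<omega> (F j) \<subseteq> F (2*n - j)"
proof
  fix v assume v: "v \<in> sorth \<omega> (F j)"
  show "v \<in> F (2*n - j)"
  proof (rule ccontr)
    assume "v \<notin> F (2*n - j)"
    then obtain b where b: "2*n - j \<le> b" "b < 2*n" "e b \<bullet> v \<noteq> 0"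
      using flag_eq_coords_vanish[of "2*n - j"] by auto
    then have "v \<noteq> 0" by auto
    then obtain t where t: "t < 2*n" "\<And>b. t < b \<Longrightarrow> b < 2*n \<Longrightarrow> e b \<bullet> v = 0"
        "\<omega> v (e (2*n - 1 - t)) \<noteq> 0"
      using antitriangular_top_coord[OF \<omega>] by blast
    have "b \<le> t" using t(2) b by (meson not_le)
    then have "e (2*n - 1 - t) \<in> F j" using b t j by (intro e_in_flag_le) auto
    then have "\<omega> v (e (2*n - 1 - t)) = 0" using v unfolding sorth_def by auto
    with t(3) show False by simp
  qed
qed

lemma flag_subset_sorth:
  assumes \<omega>: "antitriangular \<omega>" and j: "j \<le> 2*n"
  shows "F (2*n - j) \<subseteq> sorth \<omega> (F j)"
proof
  fix v assume v: "v \<in> F (2*n - j)"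
  have bil: "bilinear \<omega>" using antitriangularD(1)[OF \<omega>] .
  show "v \<in> sorth \<omega> (F j)"
    unfolding sorth_def
  proof (intro CollectI ballI)
    fix w assume w: "w \<in> F j"
    have expand_w: "\<omega> (e a) w = (\<Sum>b<2*n. (e b \<bullet> w) * \<omega> (e a) (e b))" for a
      by (rule bilinear_expand_right[OF bil])
    have "\<omega> v w = (\<Sum>a<2*n. (e a \<bullet> v) * \<omega> (e a) w)"
      by (rule bilinear_expand_left[OF bil])
    also have "\<dots> = (\<Sum>a<2*n. (e a \<bullet> v) * (\<Sum>b<2*n. (e b \<bullet> w) * \<omega> (e a) (e b)))"
      by (simp only: expand_w)
    also have "\<dots> = 0"
    proof (intro sum.neutral ballI)
      fix a assume a: "a \<in> {..<2*n}"
      show "(e a \<bullet> v) * (\<Sum>b<2*n. (e b \<bullet> w) * \<omega> (e a) (e b)) = 0"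
      proof (cases "2*n - j \<le> a")
        case True
        then show ?thesis using v flag_eq_coords_vanish[of "2*n - j"] a by auto
      next
        case False
        have "(\<Sum>b<2*n. (e b \<bullet> w) * \<omega> (e a) (e b)) = 0"
        proof (rule sum.neutral, rule ballI)
          fix b assume b: "b \<in> {..<2*n}"
          show "(e b \<bullet> w) * \<omega> (e a) (e b) = 0"
            using w flag_eq_coords_vanish[OF j] antitriangularD(3)[OF \<omega>, of a b] False a b
            by (cases "j \<le> b") auto
        qed
        then show ?thesis by simp
      qed
    qed
    finally show "\<omega> v w = 0" .
  qed
qed

lemma antitriangular_sorth:
  "antitriangular \<omega> \<Longrightarrow> j \<le> 2*n \<Longrightarrow> sorth \<omega> (F j) = F (2*n - j)"
  using sorth_flag_subset flag_subset_sorth by blast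

lemma antitriangular_in_OmegaF:
  assumes \<omega>: "antitriangular \<omega>"
  shows "\<omega> \<in> OmegaF n F"
proof -
  have "symplectic_form \<omega>"
    unfolding symplectic_form_def
    using antitriangularD(1,2)[OF \<omega>] antitriangular_top_coord[OF \<omega>] by metis
  moreover have "isotropic \<omega> (F j)" if "j \<le> n" for j
    unfolding isotropic_def using antitriangular_sorth[OF \<omega>, of j] flag_mono[of j "2*n - j"] that by auto
  moreover have "coisotropic \<omega> (F j)" if "n \<le> j" "j \<le> 2*n" for j
    unfolding coisotropic_def using antitriangular_sorth[OF \<omega>, of j] flag_mono[of "2*n - j" j] that by auto
  ultimately show ?thesis unfolding OmegaF_def using antitriangular_sorth[OF \<omega>] by auto
qed

lemma OmegaF_bilinear:
  assumes "\<omega> \<in> OmegaF n F"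
  shows "bilinear \<omega>" and "\<And>v. \<omega> v v = 0" and "\<And>j. j \<le> n \<Longrightarrow> sorth \<omega> (F j) = F (2*n - j)"
  using assms unfolding OmegaF_def symplectic_form_def by auto

lemma OmegaF_above_antidiag:
  assumes \<omega>: "\<omega> \<in> OmegaF n F" and ab: "a < 2*n" "b < 2*n" "a + b < 2*n - 1"
  shows "\<omega> (e a) (e b) = 0"
proof -
  have low: "\<omega> (e b) (e a) = 0" if "a < n" "b < 2*n" "a + b < 2*n - 1" for a b
  proof -
    have "e b \<in> sorth \<omega> (F (Suc a))"
      using e_in_flag_le[of b "2*n - Suc a"] OmegaF_bilinear(3)[OF \<omega>, of "Suc a"] that by auto
    then show ?thesis using e_in_flag[of a] that unfolding sorth_def by auto
  qed
  show ?thesis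
    using low[of a b] low[of b a] ab alternating_antisym[OF OmegaF_bilinear(1,2)[OF \<omega>], of "e a" "e b"]
    by (cases "a < n") auto
qed

lemma OmegaF_antidiag_ne_0:
  assumes \<omega>: "\<omega> \<in> OmegaF n F" and a: "a < n"
  shows "\<omega> (e a) (e (2*n - 1 - a)) \<noteq> 0"
proof
  assume z: "\<omega> (e a) (e (2*n - 1 - a)) = 0"
  note bil = OmegaF_bilinear(1)[OF \<omega>] and alt = OmegaF_bilinear(2)[OF \<omega>]
  define s where "s = 2*n - 1 - a"
  have s: "s < 2*n" "2*n - Suc a = s" using a unfolding s_def by auto
  have s_zero: "\<omega> (e s) (e c) = 0" if "c \<le> a" for c
  proof (cases "c = a")
    case True
    then show ?thesis using z alternating_antisym[OF bil alt, of "e s" "e a"] unfolding s_def by simp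
  next
    case False
    then show ?thesis using OmegaF_above_antidiag[OF \<omega>, of s c] that a unfolding s_def by auto
  qed
  have "e s \<in> sorth \<omega> (F (Suc a))"
    unfolding sorth_def
  proof (intro CollectI ballI)
    fix w assume w: "w \<in> F (Suc a)"
    have "\<omega> (e s) w = (\<Sum>c<2*n. (e c \<bullet> w) * \<omega> (e s) (e c))" by (rule bilinear_expand_right[OF bil])
    also have "\<dots> = 0"
    proof (intro sum.neutral ballI)
      fix c assume c: "c \<in> {..<2*n}"
      show "(e c \<bullet> w) * \<omega> (e s) (e c) = 0"
      proof (cases "c \<le> a")
        case False
        then have "e c \<bullet> w = 0" using w flag_eq_coords_vanish[of "Suc a"] a c by auto
        then show ?thesis by simp
      qed (simp add: s_zero)
    qed
    finally show "\<omega> (e s) w = 0" .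
  qed
  then have "e s \<in> F s" using OmegaF_bilinear(3)[OF \<omega>, of "Suc a"] a s by simp
  then have "e s \<bullet> e s = 0" using e_orth_flag s by auto
  with e_unit[OF s(1)] show False by simp
qed

lemma OmegaF_antitriangular: "\<omega> \<in> OmegaF n F \<Longrightarrow> antitriangular \<omega>"
  unfolding antitriangular_def
  using OmegaF_bilinear OmegaF_above_antidiag OmegaF_antidiag_ne_0 by blast

lemma OmegaF_eq: "OmegaF n F = Collect antitriangular"
  using antitriangular_in_OmegaF OmegaF_antitriangular by blast

definition antidiag_pos :: "('v \<Rightarrow> 'v \<Rightarrow> real) \<Rightarrow> nat \<Rightarrow> bool" where
  "antidiag_pos \<omega> a \<longleftrightarrow> 0 < \<omega> (e a) (e (2*n - 1 - a))"

definition sign_class :: "('v \<Rightarrow> 'v \<Rightarrow> real) \<Rightarrow> ('v \<Rightarrow> 'v \<Rightarrow> real) set" where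
  "sign_class \<omega>\<^sub>0 = {\<omega>. antitriangular \<omega> \<and> (\<forall>a<n. antidiag_pos \<omega> a = antidiag_pos \<omega>\<^sub>0 a)}"

lemma convex_forms_sign_class: "convex_forms (sign_class \<omega>\<^sub>0)"
  unfolding convex_forms_def
proof (intro ballI allI impI)
  fix x y and t :: real assume x: "x \<in> sign_class \<omega>\<^sub>0" and y: "y \<in> sign_class \<omega>\<^sub>0" and t: "0 \<le> t \<and> t \<le> 1"
  let ?z = "\<lambda>u v. t * x u v + (1 - t) * y u v"
  have x': "antitriangular x" and y': "antitriangular y"
    and same: "\<And>a. a < n \<Longrightarrow> antidiag_pos x a = antidiag_pos \<omega>\<^sub>0 a \<and> antidiag_pos y a = antidiag_pos \<omega>\<^sub>0 a"
    using x y unfolding sign_class_def by auto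
  have antidiag: "?z (e a) (e (2*n - 1 - a)) \<noteq> 0 \<and> antidiag_pos ?z a = antidiag_pos \<omega>\<^sub>0 a" if a: "a < n" for a
    using convex_comb_sign[of "x (e a) (e (2*n - 1 - a))" "y (e a) (e (2*n - 1 - a))" t]
      antitriangularD(4)[OF x' a] antitriangularD(4)[OF y' a] same[OF a] t
    unfolding antidiag_pos_def by auto
  have "antitriangular ?z"
    unfolding antitriangular_def
  proof (intro conjI allI impI)
    show "bilinear ?z"
      using antitriangularD(1)[OF x'] antitriangularD(1)[OF y']
      unfolding bilinear_def linear_iff by (simp add: algebra_simps)
  qed (use antitriangularD(2,3)[OF x'] antitriangularD(2,3)[OF y'] antidiag in auto)
  then show "?z \<in> sign_class \<omega>\<^sub>0" unfolding sign_class_def using antidiag by simp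
qed

lemma sign_class_subset_connected_component:
  assumes \<omega>\<^sub>0: "antitriangular \<omega>\<^sub>0"
  shows "sign_class \<omega>\<^sub>0 \<subseteq> connected_component_set (OmegaF n F) \<omega>\<^sub>0"
proof
  fix \<omega>\<^sub>1 assume \<omega>\<^sub>1: "\<omega>\<^sub>1 \<in> sign_class \<omega>\<^sub>0"
  have \<omega>\<^sub>0_class: "\<omega>\<^sub>0 \<in> sign_class \<omega>\<^sub>0" using \<omega>\<^sub>0 unfolding sign_class_def by simp
  let ?T = "(\<lambda>t. \<lambda>u v. t * \<omega>\<^sub>1 u v + (1 - t) * \<omega>\<^sub>0 u v) ` {0..1}"
  have "connected ?T"
    by (rule connected_continuous_image[OF continuous_on_convex_comb_form]) simp
  moreover have "?T \<subseteq> OmegaF n F"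
    using convex_forms_sign_class[of \<omega>\<^sub>0] \<omega>\<^sub>1 \<omega>\<^sub>0_class
    unfolding convex_forms_def sign_class_def OmegaF_eq by auto
  moreover have "\<omega>\<^sub>0 \<in> ?T" by (rule image_eqI[where x = 0]) auto
  moreover have "\<omega>\<^sub>1 \<in> ?T" by (rule image_eqI[where x = 1]) auto
  ultimately have "connected_component (OmegaF n F) \<omega>\<^sub>0 \<omega>\<^sub>1" by (rule connected_componentI)
  then show "\<omega>\<^sub>1 \<in> connected_component_set (OmegaF n F) \<omega>\<^sub>0" by simp
qed

lemma antidiag_pos_connected_component:
  assumes \<omega>\<^sub>0: "antitriangular \<omega>\<^sub>0" and \<omega>\<^sub>1: "\<omega>\<^sub>1 \<in> connected_component_set (OmegaF n F) \<omega>\<^sub>0"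
    and a: "a < n"
  shows "antidiag_pos \<omega>\<^sub>1 a = antidiag_pos \<omega>\<^sub>0 a"
proof (rule ccontr)
  assume differ: "antidiag_pos \<omega>\<^sub>1 a \<noteq> antidiag_pos \<omega>\<^sub>0 a"
  let ?C = "connected_component_set (OmegaF n F) \<omega>\<^sub>0"
  let ?f = "\<lambda>\<omega>::'v\<Rightarrow>'v\<Rightarrow>real. \<omega> (e a) (e (2*n - 1 - a))"
  have C: "connected ?C" "?C \<subseteq> Collect antitriangular" "\<omega>\<^sub>0 \<in> ?C"
    using connected_component_subset[of "OmegaF n F" \<omega>\<^sub>0] antitriangular_in_OmegaF[OF \<omega>\<^sub>0]
    by (auto simp: OmegaF_eq)
  have conn: "connected (?f ` ?C)" by (rule connected_continuous_image[OF continuous_on_eval_form C(1)])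
  have nz: "?f \<omega>\<^sub>0 \<noteq> 0" "?f \<omega>\<^sub>1 \<noteq> 0"
    using antitriangularD(4)[OF _ a] C(2,3) \<omega>\<^sub>1 by blast+
  have "0 \<in> ?f ` ?C"
  proof (cases "0 < ?f \<omega>\<^sub>0")
    case True
    then have "?f \<omega>\<^sub>1 < 0" using differ nz unfolding antidiag_pos_def by auto
    then show ?thesis
      using connected_contains_Icc[OF conn, of "?f \<omega>\<^sub>1" "?f \<omega>\<^sub>0"] True \<omega>\<^sub>1 C(3) by auto
  next
    case False
    then have "?f \<omega>\<^sub>0 < 0" "0 < ?f \<omega>\<^sub>1" using differ nz unfolding antidiag_pos_def by auto
    then show ?thesis
      using connected_contains_Icc[OF conn, of "?f \<omega>\<^sub>0" "?f \<omega>\<^sub>1"] \<omega>\<^sub>1 C(3) by auto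
  qed
  then obtain \<omega> where \<omega>: "0 = ?f \<omega>" "\<omega> \<in> ?C" by (rule imageE)
  have "antitriangular \<omega>" using subsetD[OF C(2) \<omega>(2)] by simp
  with \<omega>(1) show False using antitriangularD(4)[OF _ a] by simp
qed

lemma connected_component_OmegaF_eq:
  assumes \<omega>\<^sub>0: "antitriangular \<omega>\<^sub>0"
  shows "connected_component_set (OmegaF n F) \<omega>\<^sub>0 = sign_class \<omega>\<^sub>0"
proof
  show "connected_component_set (OmegaF n F) \<omega>\<^sub>0 \<subseteq> sign_class \<omega>\<^sub>0"
  proof
    fix \<omega>\<^sub>1 assume \<omega>\<^sub>1: "\<omega>\<^sub>1 \<in> connected_component_set (OmegaF n F) \<omega>\<^sub>0"
    then have "antitriangular \<omega>\<^sub>1" using connected_component_subset OmegaF_antitriangular by blast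
    then show "\<omega>\<^sub>1 \<in> sign_class \<omega>\<^sub>0"
      unfolding sign_class_def using antidiag_pos_connected_component[OF \<omega>\<^sub>0 \<omega>\<^sub>1] by auto
  qed
qed (rule sign_class_subset_connected_component[OF \<omega>\<^sub>0])

end

section \<open>Orientations of the quotients\<close>

context adapted_basis
begin

text \<open>For \<open>j < n\<close>, the basis vectors \<open>e j, \<dots>, e (2*n - 1 - j)\<close>, which span a complement of
  \<open>F j\<close> in \<open>F (2*n - j)\<close>, are enumerated as \<open>e j, e (2*n - 1 - j), e (j + 1), e (2*n - 2 - j), \<dots>\<close>,
  so that consecutive pairs are antidiagonal.\<close>

definition qidx :: "nat \<Rightarrow> nat \<Rightarrow> nat" where
  "qidx j k = (if even k then j + k div 2 else 2*n - 1 - j - k div 2)"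

definition qcoord :: "nat \<Rightarrow> 'v list \<Rightarrow> nat \<Rightarrow> nat \<Rightarrow> real" where
  "qcoord j bs i k = e (qidx j k) \<bullet> bs ! i"

definition pos_orient :: "nat \<Rightarrow> 'v list set" where
  "pos_orient j = {cs. qbasis (F (2*n - j)) (F j) cs \<and> 0 < ldet (2*(n - j)) (qcoord j cs)}"

definition neg_orient :: "nat \<Rightarrow> 'v list set" where
  "neg_orient j = {cs. qbasis (F (2*n - j)) (F j) cs \<and> \<not> 0 < ldet (2*(n - j)) (qcoord j cs)}"

end

locale quotient_flag = adapted_basis +
  fixes j :: nat
  assumes j_lt: "j < n"
begin

abbreviation qdim where "qdim \<equiv> 2*(n - j)"
abbreviation Vhi where "Vhi \<equiv> F (2*n - j)"
abbreviation Vlo where "Vlo \<equiv> F j"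
abbreviation qvec where "qvec k \<equiv> e (qidx j k)"

lemma qidx_range: "k < qdim \<Longrightarrow> j \<le> qidx j k \<and> qidx j k < 2*n - j"
  unfolding qidx_def using j_lt by (auto elim!: evenE oddE)

lemma qidx_inj: "k < qdim \<Longrightarrow> k' < qdim \<Longrightarrow> qidx j k = qidx j k' \<Longrightarrow> k = k'"
  unfolding qidx_def using j_lt by (auto split: if_splits elim!: evenE oddE)

lemma qidx_surj: "j \<le> b \<Longrightarrow> b < 2*n - j \<Longrightarrow> \<exists>k<qdim. qidx j k = b"
proof (cases "b < n")
  case True
  then show "\<exists>k<qdim. qidx j k = b" if "j \<le> b" by (intro exI[of _ "2*(b - j)"]) (use that in \<open>auto simp: qidx_def\<close>)
next
  case False
  then show "\<exists>k<qdim. qidx j k = b" if "b < 2*n - j"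
    by (intro exI[of _ "2*(2*n - 1 - j - b) + 1"]) (use that j_lt in \<open>auto simp: qidx_def\<close>)
qed

lemma qvec_orthonormal: "k < qdim \<Longrightarrow> k' < qdim \<Longrightarrow> qvec k \<bullet> qvec k' = (if k = k' then 1 else 0)"
  using e_orthonormal[of "qidx j k" "qidx j k'"] qidx_range[of k] qidx_range[of k'] qidx_inj by auto

lemma subspace_Vhi: "subspace Vhi"
  using flag_subspace[of "2*n - j"] by simp

lemma Vlo_subset_Vhi: "Vlo \<subseteq> Vhi"
  using flag_mono[of j "2*n - j"] j_lt by auto

lemma dim_Vhi_minus_Vlo: "dim Vhi - dim Vlo = qdim"
  using flag_dim[of "2*n - j"] flag_dim[of j] j_lt by auto

lemma qvec_in_Vhi: "k < qdim \<Longrightarrow> qvec k \<in> Vhi"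
  using e_in_flag_le[of "qidx j k" "2*n - j"] qidx_range[of k] by auto

lemma mem_Vlo_iff:
  assumes x: "x \<in> Vhi"
  shows "x \<in> Vlo \<longleftrightarrow> (\<forall>k<qdim. qvec k \<bullet> x = 0)"
proof
  assume "x \<in> Vlo"
  then have coords: "e b \<bullet> x = 0" if "j \<le> b" "b < 2*n" for b
    using flag_eq_coords_vanish[of j] j_lt that by auto
  show "\<forall>k<qdim. qvec k \<bullet> x = 0"
  proof (intro allI impI)
    fix k assume "k < qdim"
    then have "j \<le> qidx j k" "qidx j k < 2*n" using qidx_range[of k] by auto
    then show "qvec k \<bullet> x = 0" using coords by blast
  qed
next
  assume coords: "\<forall>k<qdim. qvec k \<bullet> x = 0"
  have "e b \<bullet> x = 0" if b: "j \<le> b" "b < 2*n" for b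
  proof (cases "b < 2*n - j")
    case True
    then obtain k where "k < qdim" "qidx j k = b" using qidx_surj b by blast
    then show ?thesis using coords by auto
  next
    case False
    then show ?thesis using x flag_eq_coords_vanish[of "2*n - j"] b by auto
  qed
  then show "x \<in> Vlo" using flag_eq_coords_vanish[of j] j_lt by auto
qed

lemma sum_in_Vhi: "(\<And>l. l < d \<Longrightarrow> f l \<in> Vhi) \<Longrightarrow> (\<Sum>l<d. c l *\<^sub>R f l) \<in> Vhi"
  by (intro subspace_sum[OF subspace_Vhi] subspace_scale[OF subspace_Vhi]) auto

lemma diff_qcoord_expansion_in_Vlo:
  assumes x: "x \<in> Vhi"
  shows "x - (\<Sum>k<qdim. (qvec k \<bullet> x) *\<^sub>R qvec k) \<in> Vlo"
proof -
  have "qvec k' \<bullet> (\<Sum>k<qdim. (qvec k \<bullet> x) *\<^sub>R qvec k) = qvec k' \<bullet> x" if "k' < qdim" for k'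
    using that by (simp add: inner_sum_right qvec_orthonormal if_distrib cong: if_cong)
  moreover have "x - (\<Sum>k<qdim. (qvec k \<bullet> x) *\<^sub>R qvec k) \<in> Vhi"
    by (rule subspace_diff[OF subspace_Vhi x], rule sum_in_Vhi, rule qvec_in_Vhi)
  ultimately show ?thesis by (simp add: mem_Vlo_iff inner_diff_right)
qed

lemma diff_in_Vlo_iff:
  assumes bs: "set bs \<subseteq> Vhi" and cs: "set cs \<subseteq> Vhi" and i: "i < length cs"
  shows "cs ! i - (\<Sum>l<length bs. M i l *\<^sub>R bs ! l) \<in> Vlo
     \<longleftrightarrow> (\<forall>k<qdim. qcoord j cs i k = (\<Sum>l<length bs. M i l * qcoord j bs l k))"
proof -
  have "cs ! i \<in> Vhi" using subsetD[OF cs] i by simp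
  moreover have "(\<Sum>l<length bs. M i l *\<^sub>R bs ! l) \<in> Vhi"
    by (rule sum_in_Vhi, rule subsetD[OF bs]) simp
  ultimately have "cs ! i - (\<Sum>l<length bs. M i l *\<^sub>R bs ! l) \<in> Vhi"
    by (rule subspace_diff[OF subspace_Vhi])
  moreover have "qvec k \<bullet> (cs ! i - (\<Sum>l<length bs. M i l *\<^sub>R bs ! l))
      = qcoord j cs i k - (\<Sum>l<length bs. M i l * qcoord j bs l k)" for k
    unfolding qcoord_def by (simp add: inner_diff_right inner_sum_right)
  ultimately show ?thesis by (simp add: mem_Vlo_iff)
qed

lemma qbasis_iff_ldet:
  assumes len: "length bs = qdim" and bs: "set bs \<subseteq> Vhi"
  shows "qbasis Vhi Vlo bs \<longleftrightarrow> ldet qdim (qcoord j bs) \<noteq> 0"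
proof -
  have "(\<Sum>i<qdim. c i *\<^sub>R bs ! i) \<in> Vlo \<longleftrightarrow> (\<forall>k<qdim. (\<Sum>i<qdim. c i * qcoord j bs i k) = 0)" for c
  proof -
    have "(\<Sum>i<qdim. c i *\<^sub>R bs ! i) \<in> Vhi"
      by (rule sum_in_Vhi, rule subsetD[OF bs]) (simp add: len)
    moreover have "qvec k \<bullet> (\<Sum>i<qdim. c i *\<^sub>R bs ! i) = (\<Sum>i<qdim. c i * qcoord j bs i k)" for k
      unfolding qcoord_def by (simp add: inner_sum_right)
    ultimately show ?thesis by (simp add: mem_Vlo_iff)
  qed
  then show ?thesis unfolding qbasis_def ldet_ne_0_iff using len bs dim_Vhi_minus_Vlo by auto
qed

lemma same_orient_iff_ldet_sign:
  assumes bs: "qbasis Vhi Vlo bs" and cs: "qbasis Vhi Vlo cs"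
  shows "same_orient Vhi Vlo bs cs \<longleftrightarrow> (0 < ldet qdim (qcoord j bs) \<longleftrightarrow> 0 < ldet qdim (qcoord j cs))"
proof -
  have len: "length bs = qdim" "length cs = qdim" and sets: "set bs \<subseteq> Vhi" "set cs \<subseteq> Vhi"
    using bs cs dim_Vhi_minus_Vlo unfolding qbasis_def by auto
  have nz: "ldet qdim (qcoord j bs) \<noteq> 0" "ldet qdim (qcoord j cs) \<noteq> 0"
    using qbasis_iff_ldet len sets bs cs by blast+
  have transition: "(\<forall>i<length cs. cs ! i - (\<Sum>l<length bs. M i l *\<^sub>R bs ! l) \<in> Vlo)
      \<longleftrightarrow> (\<forall>i<qdim. \<forall>k<qdim. qcoord j cs i k = (\<Sum>l<qdim. M i l * qcoord j bs l k))" for M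
    using diff_in_Vlo_iff[OF sets] len by auto
  have det_transition: "ldet qdim (qcoord j cs) = ldet qdim M * ldet qdim (qcoord j bs)"
    if "\<forall>i<qdim. \<forall>k<qdim. qcoord j cs i k = (\<Sum>l<qdim. M i l * qcoord j bs l k)" for M
    using ldet_cong[of qdim "qcoord j cs" "\<lambda>i k. \<Sum>l<qdim. M i l * qcoord j bs l k"] ldet_mult that by simp
  show ?thesis
  proof
    assume "same_orient Vhi Vlo bs cs"
    then obtain M where M: "\<forall>i<length cs. cs ! i - (\<Sum>l<length bs. M i l *\<^sub>R bs ! l) \<in> Vlo"
        and pos: "0 < ldet (length bs) M"
      unfolding same_orient_def by blast
    have "ldet qdim (qcoord j cs) = ldet qdim M * ldet qdim (qcoord j bs)"
      using M unfolding transition by (rule det_transition)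
    then show "0 < ldet qdim (qcoord j bs) \<longleftrightarrow> 0 < ldet qdim (qcoord j cs)"
      using pos len nz by (simp add: zero_less_mult_iff)
  next
    assume sign: "0 < ldet qdim (qcoord j bs) \<longleftrightarrow> 0 < ldet qdim (qcoord j cs)"
    obtain M where M: "\<And>i k. i < qdim \<Longrightarrow> k < qdim \<Longrightarrow> qcoord j cs i k = (\<Sum>l<qdim. M i l * qcoord j bs l k)"
        and det: "ldet qdim (qcoord j cs) = ldet qdim M * ldet qdim (qcoord j bs)"
      using ldet_right_factor[OF nz(1)] by blast
    have "0 < ldet qdim M"
    proof (cases "0 < ldet qdim (qcoord j bs)")
      case True
      with sign have "0 < ldet qdim M * ldet qdim (qcoord j bs)" unfolding det by blast
      with True show ?thesis by (simp add: zero_less_mult_iff)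
    next
      case False
      then have B: "ldet qdim (qcoord j bs) < 0" using nz(1) by simp
      have "\<not> 0 < ldet qdim (qcoord j cs)" using sign False by blast
      then have "ldet qdim M * ldet qdim (qcoord j bs) < 0" using nz(2) unfolding det by linarith
      with B show ?thesis by (simp add: mult_less_0_iff)
    qed
    then show "same_orient Vhi Vlo bs cs"
      unfolding same_orient_def transition using bs cs len M by auto
  qed
qed

lemma orientation_class_eq:
  assumes bs: "qbasis Vhi Vlo bs"
  shows "{cs. same_orient Vhi Vlo bs cs} = (if 0 < ldet qdim (qcoord j bs) then pos_orient j else neg_orient j)"
  using same_orient_iff_ldet_sign[OF bs] unfolding pos_orient_def neg_orient_def same_orient_def
  by auto

lemma qbasis_with_ldet:
  assumes "s \<noteq> 0"
  obtains bs where "qbasis Vhi Vlo bs" "ldet qdim (qcoord j bs) = s"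
proof -
  define bs where "bs = map (\<lambda>k. (if k = 0 then s else 1) *\<^sub>R qvec k) [0..<qdim]"
  have coord: "qcoord j bs i k = (if i = k then (if i = 0 then s else 1) else 0)" if "i < qdim" "k < qdim" for i k
    unfolding qcoord_def bs_def using that by (simp add: qvec_orthonormal)
  have "ldet qdim (qcoord j bs) = (\<Prod>i<qdim. if i = 0 then s else 1)"
    by (subst ldet_lower_triangular) (simp_all add: coord)
  also have "\<dots> = s"
    using j_lt prod.lessThan_Suc_shift[of "\<lambda>i. if i = 0 then s else 1" "qdim - 1"] by simp
  finally have "ldet qdim (qcoord j bs) = s" .
  moreover have "set bs \<subseteq> Vhi" "length bs = qdim"
    unfolding bs_def using qvec_in_Vhi subspace_scale[OF subspace_Vhi] by auto
  ultimately show ?thesis using that qbasis_iff_ldet assms by metis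
qed

lemma pos_ne_neg_orient: "pos_orient j \<noteq> neg_orient j"
proof -
  obtain bs where "qbasis Vhi Vlo bs" "ldet qdim (qcoord j bs) = 1" using qbasis_with_ldet[of 1] by auto
  then show ?thesis unfolding pos_orient_def neg_orient_def by auto
qed

lemma orientations_eq: "orientations Vhi Vlo = {pos_orient j, neg_orient j}"
proof
  show "orientations Vhi Vlo \<subseteq> {pos_orient j, neg_orient j}"
  proof
    fix X assume "X \<in> orientations Vhi Vlo"
    then obtain bs where "X = {cs. same_orient Vhi Vlo bs cs}" "qbasis Vhi Vlo bs"
      unfolding orientations_def by blast
    then show "X \<in> {pos_orient j, neg_orient j}" using orientation_class_eq by simp
  qed
  obtain bs where bs: "qbasis Vhi Vlo bs" "ldet qdim (qcoord j bs) = 1" using qbasis_with_ldet[of 1] by auto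
  obtain cs where cs: "qbasis Vhi Vlo cs" "ldet qdim (qcoord j cs) = -1" using qbasis_with_ldet[of "-1"] by auto
  have "pos_orient j = {cs. same_orient Vhi Vlo bs cs}" using orientation_class_eq[OF bs(1)] bs(2) by simp
  moreover have "neg_orient j = {bs. same_orient Vhi Vlo cs bs}" using orientation_class_eq[OF cs(1)] cs(2) by simp
  ultimately show "{pos_orient j, neg_orient j} \<subseteq> orientations Vhi Vlo"
    unfolding orientations_def using bs(1) cs(1) by blast
qed

end

section \<open>The induced orientation\<close>

locale quotient_form = quotient_flag +
  fixes \<omega>
  assumes antitri: "antitriangular \<omega>"
begin

lemma form_bilinear: "bilinear \<omega>" using antitriangularD(1)[OF antitri] .

lemma form_alternating: "\<omega> v v = 0" using antitriangularD(2)[OF antitri] .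

lemma form_skew: "\<omega> u v = - \<omega> v u" by (rule alternating_antisym[OF form_bilinear form_alternating])

lemma qidx_even: "qidx j (2*i) = j + i" by (simp add: qidx_def)

lemma qidx_odd: "qidx j (2*i+1) = 2*n - 1 - j - i" by (simp add: qidx_def)

definition antidiag :: "nat \<Rightarrow> real" where
  "antidiag l = \<omega> (qvec (2*l)) (qvec (2*l+1))"

lemma antidiag_eq: "l < n - j \<Longrightarrow> antidiag l = \<omega> (e (j+l)) (e (2*n - 1 - (j+l)))"
  unfolding antidiag_def qidx_even qidx_odd by (simp add: diff_diff_left)

lemma antidiag_ne_0: "l < n - j \<Longrightarrow> antidiag l \<noteq> 0"
  using antidiag_eq antitriangular_antidiag_ne_0[OF antitri, of "j+l"] j_lt by auto

lemma even_qvec_isotropic: "i < n - j \<Longrightarrow> i' < n - j \<Longrightarrow> \<omega> (qvec (2*i)) (qvec (2*i')) = 0"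
  unfolding qidx_even by (rule antitriangularD(3)[OF antitri]) (use j_lt in auto)

lemma even_odd_qvec_zero: "i < i' \<Longrightarrow> i' < n - j \<Longrightarrow> \<omega> (qvec (2*i)) (qvec (2*i'+1)) = 0"
  unfolding qidx_even qidx_odd by (rule antitriangularD(3)[OF antitri]) (use j_lt in auto)

lemma Vhi_Vlo_orth:
  assumes "v \<in> Vhi" "w \<in> Vlo"
  shows "\<omega> v w = 0" "\<omega> w v = 0"
proof -
  show "\<omega> v w = 0" using assms antitriangular_sorth[OF antitri, of j] j_lt unfolding sorth_def by auto
  then show "\<omega> w v = 0" using form_skew[of w v] by simp
qed

abbreviation even_span where "even_span l \<equiv> span ((\<lambda>i. qvec (2*i)) ` {..<l})"

abbreviation lower_span where "lower_span a \<equiv> span (qvec ` {..<a})"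

text \<open>The vectors \<open>c 0, \<dots>, c (2*p - 1)\<close> produced by symplectic Gram-Schmidt from
  \<open>qvec 0, \<dots>, qvec (2*p - 1)\<close>; the even ones stay in the isotropic span of the even \<open>qvec\<close>.\<close>

definition gs_family :: "nat \<Rightarrow> (nat \<Rightarrow> _) \<Rightarrow> bool" where
  "gs_family p c \<longleftrightarrow> (\<forall>l<p. c (2*l) - (1 / antidiag l) *\<^sub>R qvec (2*l) \<in> even_span l)
     \<and> (\<forall>l<p. c (2*l+1) - qvec (2*l+1) \<in> lower_span (2*l+1))
     \<and> (\<forall>a<2*p. \<forall>b<2*p. \<omega> (c a) (c b) = sympl_std a b)"

lemma gs_family_even_span:
  assumes "gs_family p c" "l < p"
  shows "c (2*l) \<in> even_span (Suc l)"
proof -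
  have "c (2*l) - (1 / antidiag l) *\<^sub>R qvec (2*l) \<in> even_span l"
    using assms unfolding gs_family_def by blast
  moreover have "even_span l \<subseteq> even_span (Suc l)" by (intro span_mono) auto
  ultimately have "c (2*l) - (1 / antidiag l) *\<^sub>R qvec (2*l) \<in> even_span (Suc l)" by blast
  moreover have "qvec (2*l) \<in> even_span (Suc l)" by (intro span_base) auto
  ultimately show ?thesis by (metis span_add span_mul diff_add_cancel)
qed

lemma gs_family_lower_span:
  assumes c: "gs_family p c" and k: "k < 2*p"
  shows "c k \<in> lower_span (2*p)"
proof (cases "even k")
  case True
  then obtain l where kl: "k = 2*l" by (auto elim: evenE)
  then have "(\<lambda>i. qvec (2*i)) ` {..<Suc l} \<subseteq> qvec ` {..<2*p}" using k by auto
  moreover have "c (2*l) \<in> even_span (Suc l)" using gs_family_even_span[OF c, of l] kl k by simp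
  ultimately show ?thesis using span_mono kl by blast
next
  case False
  then obtain l where kl: "k = 2*l+1" by (auto elim: oddE)
  have "l < p" using k kl by simp
  then have "c (2*l+1) - qvec (2*l+1) \<in> lower_span (2*l+1)" using c unfolding gs_family_def by blast
  moreover have "lower_span (2*l+1) \<subseteq> lower_span (2*p)" using k kl by (intro span_mono) auto
  ultimately have "c (2*l+1) - qvec (2*l+1) \<in> lower_span (2*p)" by blast
  moreover have "qvec (2*l+1) \<in> lower_span (2*p)" using k kl by (intro span_base) auto
  ultimately show ?thesis using kl by (metis span_add diff_add_cancel)
qed

lemma gs_family_gram: "gs_family p c \<Longrightarrow> a < 2*p \<Longrightarrow> b < 2*p \<Longrightarrow> \<omega> (c a) (c b) = sympl_std a b"
  unfolding gs_family_def by blast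

lemma gs_family_even_orth:
  assumes c: "gs_family p c" and p: "p < n - j" and l: "l < p"
  shows "\<omega> (qvec (2*p)) (c (2*l)) = 0" and "\<omega> (c (2*l)) (qvec (2*p+1)) = 0"
proof -
  show "\<omega> (qvec (2*p)) (c (2*l)) = 0"
    by (rule bilinear_eq_0_on_span_right[OF form_bilinear gs_family_even_span[OF c l]])
      (use l p even_qvec_isotropic in auto)
  show "\<omega> (c (2*l)) (qvec (2*p+1)) = 0"
    by (rule bilinear_eq_0_on_span_left[OF form_bilinear gs_family_even_span[OF c l]])
      (use l p even_odd_qvec_zero in auto)
qed

lemma gs_family_proj_pair:
  assumes c: "gs_family p c" and p: "p < n - j"
  shows "\<omega> (sympl_proj \<omega> c p (qvec (2*p))) (sympl_proj \<omega> c p (qvec (2*p+1))) = antidiag p"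
proof -
  let ?P = "sympl_proj \<omega> c p"
  interpret R: linear "\<lambda>w. \<omega> (?P (qvec (2*p))) w" using form_bilinear by (simp add: bilinear_def)
  have "\<omega> (?P (qvec (2*p))) (?P (qvec (2*p+1))) = \<omega> (?P (qvec (2*p))) (qvec (2*p+1))"
    unfolding sympl_proj_def[of _ _ _ "qvec (2*p+1)"]
    by (simp add: R.diff R.sum R.scale sympl_proj_orth[OF form_bilinear gs_family_gram[OF c]])
  also have "\<dots> = antidiag p"
    unfolding antidiag_def sympl_proj_left[OF form_bilinear]
    by (simp add: gs_family_even_orth[OF c p] gs_family_even_orth(2)[OF c p, simplified])
  finally show ?thesis .
qed

lemma gs_family_proj_even:
  assumes c: "gs_family p c" and p: "p < n - j"
  shows "sympl_proj \<omega> c p (qvec (2*p)) - qvec (2*p) \<in> even_span p"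
proof -
  have "sympl_proj \<omega> c p (qvec (2*p)) - qvec (2*p) = - (\<Sum>l<p. \<omega> (qvec (2*p)) (c (2*l+1)) *\<^sub>R c (2*l))"
    unfolding sympl_proj_def by (simp add: gs_family_even_orth[OF c p] sum_negf)
  also have "\<dots> \<in> even_span p"
  proof (intro span_neg span_sum span_mul)
    fix l assume l: "l \<in> {..<p}"
    have "even_span (Suc l) \<subseteq> even_span p" using l by (intro span_mono) auto
    then show "c (2*l) \<in> even_span p" using gs_family_even_span[OF c, of l] l by auto
  qed
  finally show ?thesis .
qed

lemma gs_family_proj_odd:
  assumes c: "gs_family p c"
  shows "sympl_proj \<omega> c p (qvec (2*p+1)) - qvec (2*p+1) \<in> lower_span (2*p+1)"
proof -
  have "sympl_proj \<omega> c p (qvec (2*p+1)) - qvec (2*p+1) = - (\<Sum>l<p.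
      \<omega> (qvec (2*p+1)) (c (2*l+1)) *\<^sub>R c (2*l) - \<omega> (qvec (2*p+1)) (c (2*l)) *\<^sub>R c (2*l+1))"
    unfolding sympl_proj_def by simp
  also have "\<dots> \<in> lower_span (2*p)"
    by (intro span_neg span_sum span_diff span_mul gs_family_lower_span[OF c]) auto
  also have "lower_span (2*p) \<subseteq> lower_span (2*p+1)" by (intro span_mono) auto
  finally show ?thesis .
qed

lemma gs_family_step:
  assumes c: "gs_family p c" and p: "p < n - j"
  defines "x \<equiv> (1 / antidiag p) *\<^sub>R sympl_proj \<omega> c p (qvec (2*p))"
    and "y \<equiv> sympl_proj \<omega> c p (qvec (2*p+1))"
  shows "gs_family (Suc p) (c(2*p := x, 2*p+1 := y))"
proof -
  have xy: "\<omega> x y = 1"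
    unfolding x_def y_def using gs_family_proj_pair[OF c p] antidiag_ne_0[OF p]
    by (simp add: bilinear_lmul[OF form_bilinear])
  have "x - (1 / antidiag p) *\<^sub>R qvec (2*p) \<in> even_span p"
    using span_mul[OF gs_family_proj_even[OF c p], of "1 / antidiag p"]
    unfolding x_def by (simp add: scaleR_diff_right)
  then have spans: "\<forall>l<Suc p. (c(2*p := x, 2*p+1 := y)) (2*l) - (1 / antidiag l) *\<^sub>R qvec (2*l) \<in> even_span l
      \<and> (c(2*p := x, 2*p+1 := y)) (2*l+1) - qvec (2*l+1) \<in> lower_span (2*l+1)"
    using c gs_family_proj_odd[OF c] unfolding gs_family_def y_def by (auto simp: less_Suc_eq)
  have "\<omega> ((c(2*p := x, 2*p+1 := y)) a) ((c(2*p := x, 2*p+1 := y)) b) = sympl_std a b"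
    if "a < 2*Suc p" "b < 2*Suc p" for a b
    using sympl_std_gram_extend[OF form_bilinear form_alternating gs_family_gram[OF c] _ _ xy that]
      sympl_proj_orth[OF form_bilinear gs_family_gram[OF c]]
    unfolding x_def y_def by (simp add: bilinear_lmul[OF form_bilinear])
  with spans show ?thesis unfolding gs_family_def by blast
qed

lemma gs_family_exists: "p \<le> n - j \<Longrightarrow> \<exists>c. gs_family p c"
proof (induction p)
  case 0
  show ?case unfolding gs_family_def by simp
next
  case (Suc p)
  then obtain c where "gs_family p c" by auto
  then show ?case using gs_family_step Suc.prems by fastforce
qed

lemma qvec_inner_lower_span:
  assumes "u \<in> lower_span a" "a \<le> k" "k < qdim"
  shows "qvec k \<bullet> u = 0"
proof (rule linear_eq_0_on_span[OF bounded_linear.linear[OF bounded_linear_inner_right] _ assms(1)])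
  fix x assume "x \<in> qvec ` {..<a}"
  then show "qvec k \<bullet> x = 0" using qvec_orthonormal assms(2,3) by auto
qed

lemma lower_span_subset_Vhi: "a \<le> qdim \<Longrightarrow> lower_span a \<subseteq> Vhi"
  by (rule span_minimal[OF _ subspace_Vhi]) (use qvec_in_Vhi in auto)

lemma gs_family_triangular:
  assumes c: "gs_family p c" and a: "a < 2*p"
  shows "c a - (if even a then 1 / antidiag (a div 2) else 1) *\<^sub>R qvec a \<in> lower_span a"
proof (cases "even a")
  case True
  then obtain l where al: "a = 2*l" by (auto elim: evenE)
  have "even_span l \<subseteq> lower_span a" unfolding al by (intro span_mono) auto
  moreover have "c (2*l) - (1 / antidiag l) *\<^sub>R qvec (2*l) \<in> even_span l"
    using c a al unfolding gs_family_def by auto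
  ultimately show ?thesis using al by auto
next
  case False
  then obtain l where "a = 2*l+1" by (auto elim: oddE)
  then show ?thesis using c a unfolding gs_family_def by auto
qed

lemma sympl_qbasis_exists:
  obtains cs where "sympl_qbasis \<omega> Vhi Vlo cs" "ldet qdim (qcoord j cs) = (\<Prod>l<n-j. 1 / antidiag l)"
proof -
  obtain c where c: "gs_family (n-j) c" using gs_family_exists by blast
  define diag where "diag a = (if even a then 1 / antidiag (a div 2) else 1)" for a
  have tri: "c a - diag a *\<^sub>R qvec a \<in> lower_span a" if "a < qdim" for a
    using gs_family_triangular[OF c that] unfolding diag_def .
  have c_Vhi: "c a \<in> Vhi" if a: "a < qdim" for a
  proof -
    have "c a - diag a *\<^sub>R qvec a \<in> Vhi" using tri[OF a] lower_span_subset_Vhi[of a] a by auto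
    moreover have "diag a *\<^sub>R qvec a \<in> Vhi" using qvec_in_Vhi[OF a] subspace_scale[OF subspace_Vhi] by blast
    ultimately show ?thesis using subspace_add[OF subspace_Vhi] by fastforce
  qed
  define cs where "cs = map c [0..<qdim]"
  have cs: "length cs = qdim" "set cs \<subseteq> Vhi" "\<And>a. a < qdim \<Longrightarrow> cs ! a = c a"
    unfolding cs_def using c_Vhi by auto
  have coord: "qcoord j cs a k = (if k = a then diag a else 0)" if ak: "a \<le> k" "k < qdim" for a k
  proof -
    have "qcoord j cs a k = qvec k \<bullet> (c a - diag a *\<^sub>R qvec a) + diag a * (qvec k \<bullet> qvec a)"
      unfolding qcoord_def cs(3)[OF le_less_trans[OF ak]] by (simp add: inner_diff_right)
    also have "qvec k \<bullet> (c a - diag a *\<^sub>R qvec a) = 0"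
      using qvec_inner_lower_span[OF tri ak] ak by simp
    finally show ?thesis using qvec_orthonormal ak by auto
  qed
  have "ldet qdim (qcoord j cs) = (\<Prod>a<qdim. diag a)"
    by (subst ldet_lower_triangular) (simp_all add: coord)
  also have "\<dots> = (\<Prod>l<n-j. 1 / antidiag l)"
    unfolding prod_lessThan_double diag_def by simp
  finally have det: "ldet qdim (qcoord j cs) = (\<Prod>l<n-j. 1 / antidiag l)" .
  then have "qbasis Vhi Vlo cs" using qbasis_iff_ldet[OF cs(1,2)] antidiag_ne_0 by simp
  moreover have "\<omega> (cs ! a) (cs ! b) = sympl_std a b" if "a < qdim" "b < qdim" for a b
    using c that cs(3) unfolding gs_family_def by simp
  ultimately have "sympl_qbasis \<omega> Vhi Vlo cs"
    unfolding sympl_qbasis_def sympl_std_def using cs(1) by simp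
  then show ?thesis using det by (rule that)
qed

lemma gram_qcoord:
  assumes cs: "set cs \<subseteq> Vhi" and a: "a < length cs" and b: "b < length cs"
  shows "\<omega> (cs ! a) (cs ! b) = (\<Sum>k<qdim. \<Sum>l<qdim. qcoord j cs a k * qcoord j cs b l * \<omega> (qvec k) (qvec l))"
proof -
  define u where "u i = (\<Sum>k<qdim. qcoord j cs i k *\<^sub>R qvec k)" for i
  have low: "cs ! i - u i \<in> Vlo" if "i < length cs" for i
    using diff_qcoord_expansion_in_Vlo[of "cs ! i"] subsetD[OF cs] that unfolding u_def qcoord_def by simp
  have u_Vhi: "u i \<in> Vhi" for i unfolding u_def by (rule sum_in_Vhi, rule qvec_in_Vhi)
  have "\<omega> (cs ! a) (cs ! b) = \<omega> (u a + (cs ! a - u a)) (u b + (cs ! b - u b))" by simp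
  also have "\<dots> = \<omega> (u a) (u b) + \<omega> (u a) (cs ! b - u b)
      + (\<omega> (cs ! a - u a) (u b) + \<omega> (cs ! a - u a) (cs ! b - u b))"
    by (simp only: bilinear_ladd[OF form_bilinear] bilinear_radd[OF form_bilinear])
  also have "\<dots> = \<omega> (u a) (u b)"
    using Vhi_Vlo_orth(1)[OF u_Vhi low[OF b]] Vhi_Vlo_orth(2)[OF u_Vhi low[OF a]]
      Vhi_Vlo_orth(2)[OF subsetD[OF Vlo_subset_Vhi low[OF b]] low[OF a]] by simp
  also have "\<dots> = (\<Sum>k<qdim. qcoord j cs a k * \<omega> (qvec k) (u b))"
  proof -
    interpret L: linear "\<lambda>x. \<omega> x (u b)" using form_bilinear by (simp add: bilinear_def)
    show ?thesis unfolding u_def[of a] by (simp add: L.sum L.scale)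
  qed
  also have "\<dots> = (\<Sum>k<qdim. qcoord j cs a k * (\<Sum>l<qdim. qcoord j cs b l * \<omega> (qvec k) (qvec l)))"
  proof (intro sum.cong refl arg_cong2[where f = "(*)"])
    fix k
    interpret R: linear "\<lambda>x. \<omega> (qvec k) x" using form_bilinear by (simp add: bilinear_def)
    show "\<omega> (qvec k) (u b) = (\<Sum>l<qdim. qcoord j cs b l * \<omega> (qvec k) (qvec l))"
      unfolding u_def[of b] by (simp add: R.sum R.scale)
  qed
  finally show ?thesis by (simp add: sum_distrib_left mult.assoc)
qed

lemma ldet_qcoord_sympl_qbasis:
  assumes "sympl_qbasis \<omega> Vhi Vlo cs"
  shows "ldet qdim (qcoord j cs) * pfaffian (n-j) (\<lambda>k l. \<omega> (qvec k) (qvec l)) = pfaffian (n-j) sympl_std"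
proof -
  have cs: "length cs = qdim" "set cs \<subseteq> Vhi"
    and std: "\<And>a b. a < qdim \<Longrightarrow> b < qdim \<Longrightarrow> \<omega> (cs ! a) (cs ! b) = sympl_std a b"
    using assms dim_Vhi_minus_Vlo unfolding sympl_qbasis_def qbasis_def sympl_std_def by auto
  have "pfaffian (n-j) sympl_std
      = pfaffian (n-j) (\<lambda>a b. \<Sum>k<qdim. \<Sum>l<qdim. qcoord j cs a k * qcoord j cs b l * \<omega> (qvec k) (qvec l))"
    by (rule pfaffian_cong) (use std gram_qcoord[OF cs(2)] cs(1) in auto)
  also have "\<dots> = ldet qdim (qcoord j cs) * pfaffian (n-j) (\<lambda>k l. \<omega> (qvec k) (qvec l))"
    by (rule pfaffian_congruence)
  finally show ?thesis by simp
qed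

lemma induced_orient_eq:
  "induced_orient \<omega> Vhi Vlo = (if 0 < (\<Prod>l<n-j. antidiag l) then pos_orient j else neg_orient j)"
proof -
  obtain c0 where c0: "sympl_qbasis \<omega> Vhi Vlo c0" "ldet qdim (qcoord j c0) = (\<Prod>l<n-j. 1 / antidiag l)"
    by (rule sympl_qbasis_exists)
  have "pfaffian (n-j) (\<lambda>k l. \<omega> (qvec k) (qvec l)) \<noteq> 0"
    using ldet_qcoord_sympl_qbasis[OF c0(1)] pfaffian_sympl_std_pos[of "n-j"] by auto
  then have same_det: "ldet qdim (qcoord j cs) = ldet qdim (qcoord j c0)" if "sympl_qbasis \<omega> Vhi Vlo cs" for cs
    using ldet_qcoord_sympl_qbasis[OF that] ldet_qcoord_sympl_qbasis[OF c0(1)] by (metis mult_right_cancel)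
  have "(0 < ldet qdim (qcoord j c0)) = (0 < (\<Prod>l<n-j. antidiag l))"
    using c0(2) by (simp add: prod_dividef)
  then have sympl_class: "{bs. same_orient Vhi Vlo cs bs}
      = (if 0 < (\<Prod>l<n-j. antidiag l) then pos_orient j else neg_orient j)" if "sympl_qbasis \<omega> Vhi Vlo cs" for cs
    using orientation_class_eq[of cs] that same_det[OF that] unfolding sympl_qbasis_def by simp
  show ?thesis
    unfolding induced_orient_def using sympl_class c0(1) by blast
qed

end

section \<open>Components and orientations\<close>

context adapted_basis
begin

lemma orientations_flag_eq:
  assumes "j < n"
  shows "orientations (F (2*n - j)) (F j) = {pos_orient j, neg_orient j}"
    and "pos_orient j \<noteq> neg_orient j"
proof -
  interpret q: quotient_flag n F e j by unfold_locales (fact assms)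
  show "orientations (F (2*n - j)) (F j) = {pos_orient j, neg_orient j}" by (rule q.orientations_eq)
  show "pos_orient j \<noteq> neg_orient j" by (rule q.pos_ne_neg_orient)
qed

definition antidiag_prod_pos :: "('v \<Rightarrow> 'v \<Rightarrow> real) \<Rightarrow> nat \<Rightarrow> bool" where
  "antidiag_prod_pos \<omega> j \<longleftrightarrow> 0 < (\<Prod>l<n-j. \<omega> (e (j+l)) (e (2*n - 1 - (j+l))))"

lemma induced_orient_flag:
  assumes "j < n" "antitriangular \<omega>"
  shows "induced_orient \<omega> (F (2*n - j)) (F j) = (if antidiag_prod_pos \<omega> j then pos_orient j else neg_orient j)"
proof -
  interpret q: quotient_form n F e j \<omega> by unfold_locales (use assms in auto)
  have "(\<Prod>l<n-j. q.antidiag l) = (\<Prod>l<n-j. \<omega> (e (j+l)) (e (2*n - 1 - (j+l))))"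
    by (intro prod.cong refl) (simp add: q.antidiag_eq)
  then show ?thesis using q.induced_orient_eq unfolding antidiag_prod_pos_def by simp
qed

lemma antidiag_prod_pos_Suc:
  assumes \<omega>: "antitriangular \<omega>" and j: "j < n"
  shows "antidiag_prod_pos \<omega> j \<longleftrightarrow> (antidiag_pos \<omega> j \<longleftrightarrow> antidiag_prod_pos \<omega> (Suc j))"
proof -
  let ?D = "\<lambda>a. \<omega> (e a) (e (2*n - 1 - a))"
  have "n - j = Suc (n - Suc j)" using j by simp
  then have "(\<Prod>l<n-j. ?D (j+l)) = ?D j * (\<Prod>l<n - Suc j. ?D (Suc j + l))"
    by (simp only: prod.lessThan_Suc_shift) simp
  moreover have "?D j \<noteq> 0" "(\<Prod>l<n - Suc j. ?D (Suc j + l)) \<noteq> 0"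
    using antitriangular_antidiag_ne_0[OF \<omega>] j by (simp_all add: prod_zero_iff)
  ultimately show ?thesis
    unfolding antidiag_prod_pos_def antidiag_pos_def by (auto simp: zero_less_mult_iff)
qed

lemma antidiag_prod_pos_n: "antidiag_prod_pos \<omega> n"
  unfolding antidiag_prod_pos_def by simp

lemma same_antidiag_signs_iff:
  assumes \<omega>\<^sub>1: "antitriangular \<omega>\<^sub>1" and \<omega>\<^sub>2: "antitriangular \<omega>\<^sub>2"
  shows "(\<forall>a<n. antidiag_pos \<omega>\<^sub>1 a = antidiag_pos \<omega>\<^sub>2 a)
    \<longleftrightarrow> (\<forall>j<n. antidiag_prod_pos \<omega>\<^sub>1 j = antidiag_prod_pos \<omega>\<^sub>2 j)"
proof
  assume same: "\<forall>a<n. antidiag_pos \<omega>\<^sub>1 a = antidiag_pos \<omega>\<^sub>2 a"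
  have "antidiag_prod_pos \<omega>\<^sub>1 j = antidiag_prod_pos \<omega>\<^sub>2 j" if "j \<le> n" for j
    using that
  proof (induction j rule: inc_induct)
    case base
    then show ?case by (simp add: antidiag_prod_pos_n)
  next
    case (step j)
    then show ?case using antidiag_prod_pos_Suc[OF \<omega>\<^sub>1] antidiag_prod_pos_Suc[OF \<omega>\<^sub>2] same by simp
  qed
  then show "\<forall>j<n. antidiag_prod_pos \<omega>\<^sub>1 j = antidiag_prod_pos \<omega>\<^sub>2 j" by simp
next
  assume same: "\<forall>j<n. antidiag_prod_pos \<omega>\<^sub>1 j = antidiag_prod_pos \<omega>\<^sub>2 j"
  have "antidiag_prod_pos \<omega>\<^sub>1 (Suc a) = antidiag_prod_pos \<omega>\<^sub>2 (Suc a)" if "a < n" for a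
  proof (cases "Suc a < n")
    case False
    then have "Suc a = n" using that by simp
    then show ?thesis by (simp add: antidiag_prod_pos_n)
  qed (use same in blast)
  then show "\<forall>a<n. antidiag_pos \<omega>\<^sub>1 a = antidiag_pos \<omega>\<^sub>2 a"
    using antidiag_prod_pos_Suc[OF \<omega>\<^sub>1] antidiag_prod_pos_Suc[OF \<omega>\<^sub>2] same by auto
qed

definition model_form :: "(nat \<Rightarrow> bool) \<Rightarrow> 'v \<Rightarrow> 'v \<Rightarrow> real" where
  "model_form s u v = (\<Sum>a<n. (if s a then 1 else -1)
     * ((e a \<bullet> u) * (e (2*n - 1 - a) \<bullet> v) - (e (2*n - 1 - a) \<bullet> u) * (e a \<bullet> v)))"

lemma model_form_e:
  assumes "x < 2*n" "y < 2*n"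
  shows "model_form s (e x) (e y) = (\<Sum>a<n. (if s a then 1 else -1)
     * ((if a = x \<and> 2*n - 1 - a = y then 1 else 0) - (if 2*n - 1 - a = x \<and> a = y then 1 else 0)))"
  unfolding model_form_def
  by (intro sum.cong refl) (use assms in \<open>auto simp: e_orthonormal\<close>)

lemma model_form_antitriangular: "antitriangular (model_form s)"
  and antidiag_pos_model_form: "a < n \<Longrightarrow> antidiag_pos (model_form s) a = s a"
proof -
  have antidiag: "model_form s (e b) (e (2*n - 1 - b)) = (if s b then 1 else -1)" if b: "b < n" for b
  proof -
    have "model_form s (e b) (e (2*n - 1 - b)) = (\<Sum>a<n. (if s a then 1 else -1)
        * ((if a = b \<and> 2*n - 1 - a = 2*n - 1 - b then 1 else 0)
          - (if 2*n - 1 - a = b \<and> a = 2*n - 1 - b then 1 else 0)))"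
      using b by (intro model_form_e) auto
    also have "\<dots> = (\<Sum>a<n. if a = b then (if s a then 1 else -1) else 0)"
      using b by (intro sum.cong refl) auto
    finally show ?thesis using b by simp
  qed
  have "bilinear (model_form s)"
    unfolding bilinear_def model_form_def
    by (auto intro!: linear_compose_sum linearI simp: inner_add_right inner_add_left algebra_simps)
  moreover have "model_form s v v = 0" for v unfolding model_form_def by simp
  moreover have "model_form s (e x) (e y) = 0" if "x < 2*n" "y < 2*n" "x + y < 2*n - 1" for x y
    unfolding model_form_e[OF that(1,2)] using that by (intro sum.neutral) auto
  ultimately show "antitriangular (model_form s)" unfolding antitriangular_def using antidiag by auto
  show "a < n \<Longrightarrow> antidiag_pos (model_form s) a = s a" unfolding antidiag_pos_def using antidiag by simp
qed

lemma exists_antidiag_prod_pos: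
  obtains \<omega> where "antitriangular \<omega>" "\<And>j. j < n \<Longrightarrow> antidiag_prod_pos \<omega> j = want j"
proof -
  define want' where "want' k = (k < n \<longrightarrow> want k)" for k
  define s where "s a = (want' a = want' (Suc a))" for a
  have \<omega>: "antitriangular (model_form s)" by (rule model_form_antitriangular)
  have "antidiag_prod_pos (model_form s) j = want' j" if "j \<le> n" for j
    using that
  proof (induction j rule: inc_induct)
    case base
    then show ?case by (simp add: antidiag_prod_pos_n want'_def)
  next
    case (step j)
    then show ?case
      using antidiag_prod_pos_Suc[OF \<omega>] antidiag_pos_model_form[of j s] unfolding s_def by auto
  qed
  then show ?thesis using that[OF \<omega>] unfolding want'_def by simp
qed

definition orient_tuple :: "('v \<Rightarrow> 'v \<Rightarrow> real) \<Rightarrow> nat \<Rightarrow> 'v list set" where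
  "orient_tuple \<omega> = (\<lambda>j\<in>{..<n}. induced_orient \<omega> (F (2*n - j)) (F j))"

lemma orient_tuple_eq:
  "antitriangular \<omega> \<Longrightarrow>
    orient_tuple \<omega> = (\<lambda>j\<in>{..<n}. if antidiag_prod_pos \<omega> j then pos_orient j else neg_orient j)"
  unfolding orient_tuple_def by (intro restrict_ext) (simp add: induced_orient_flag)

lemma orient_tuple_eq_iff:
  assumes \<omega>\<^sub>1: "antitriangular \<omega>\<^sub>1" and \<omega>\<^sub>2: "antitriangular \<omega>\<^sub>2"
  shows "orient_tuple \<omega>\<^sub>1 = orient_tuple \<omega>\<^sub>2 \<longleftrightarrow> (\<forall>a<n. antidiag_pos \<omega>\<^sub>1 a = antidiag_pos \<omega>\<^sub>2 a)"
proof -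
  have "orient_tuple \<omega>\<^sub>1 = orient_tuple \<omega>\<^sub>2 \<longleftrightarrow> (\<forall>j<n. antidiag_prod_pos \<omega>\<^sub>1 j = antidiag_prod_pos \<omega>\<^sub>2 j)"
    unfolding orient_tuple_eq[OF \<omega>\<^sub>1] orient_tuple_eq[OF \<omega>\<^sub>2] fun_eq_iff
    using orientations_flag_eq(2) by (auto split: if_splits)
  then show ?thesis using same_antidiag_signs_iff[OF \<omega>\<^sub>1 \<omega>\<^sub>2] by simp
qed

lemma orient_tuple_surj:
  assumes X: "X \<in> (\<Pi>\<^sub>E j\<in>{..<n}. orientations (F (2*n - j)) (F j))"
  obtains \<omega> where "antitriangular \<omega>" "orient_tuple \<omega> = X"
proof -
  obtain \<omega> where \<omega>: "antitriangular \<omega>" and signs: "\<And>j. j < n \<Longrightarrow> antidiag_prod_pos \<omega> j = (X j = pos_orient j)"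
    using exists_antidiag_prod_pos[where want = "\<lambda>j. X j = pos_orient j"] by blast
  have "orient_tuple \<omega> j = X j" for j
  proof (cases "j < n")
    case True
    then have "X j \<in> {pos_orient j, neg_orient j}" using X orientations_flag_eq(1) by auto
    then show ?thesis using True signs[OF True] orientations_flag_eq(2)[OF True]
      unfolding orient_tuple_eq[OF \<omega>] by auto
  qed (use PiE_arb[OF X] in \<open>simp add: orient_tuple_def\<close>)
  with \<omega> show ?thesis using that by blast
qed

lemma orient_tuple_in_PiE:
  "antitriangular \<omega> \<Longrightarrow> orient_tuple \<omega> \<in> (\<Pi>\<^sub>E j\<in>{..<n}. orientations (F (2*n - j)) (F j))"
  unfolding orient_tuple_eq by (auto simp: orientations_flag_eq(1))

lemma orient_tuple_component:
  assumes "\<omega> \<in> OmegaF n F"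
  shows "orient_tuple (SOME \<omega>'. \<omega>' \<in> connected_component_set (OmegaF n F) \<omega>) = orient_tuple \<omega>"
proof -
  have \<omega>: "antitriangular \<omega>" using assms OmegaF_antitriangular by blast
  have "\<omega> \<in> connected_component_set (OmegaF n F) \<omega>" using assms by simp
  then have "(SOME \<omega>'. \<omega>' \<in> connected_component_set (OmegaF n F) \<omega>) \<in> sign_class \<omega>"
    unfolding connected_component_OmegaF_eq[OF \<omega>] by (rule someI[of "\<lambda>\<omega>'. \<omega>' \<in> sign_class \<omega>"])
  then show ?thesis using orient_tuple_eq_iff[OF _ \<omega>] unfolding sign_class_def by auto
qed

lemma components_orient_tuple_bij:
  "bij_betw (\<lambda>C. orient_tuple (SOME \<omega>. \<omega> \<in> C))
     {connected_component_set (OmegaF n F) \<omega> | \<omega>. \<omega> \<in> OmegaF n F}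
     (\<Pi>\<^sub>E j\<in>{..<n}. orientations (F (2*n - j)) (F j))"
    (is "bij_betw ?G ?Comps _")
proof -
  have "inj_on ?G ?Comps"
  proof (rule inj_onI, clarify)
    fix \<omega>\<^sub>1 \<omega>\<^sub>2 assume \<omega>: "\<omega>\<^sub>1 \<in> OmegaF n F" "\<omega>\<^sub>2 \<in> OmegaF n F"
      and "?G (connected_component_set (OmegaF n F) \<omega>\<^sub>1) = ?G (connected_component_set (OmegaF n F) \<omega>\<^sub>2)"
    then have "orient_tuple \<omega>\<^sub>1 = orient_tuple \<omega>\<^sub>2"
      using orient_tuple_component[OF \<omega>(1)] orient_tuple_component[OF \<omega>(2)] by simp
    moreover have "antitriangular \<omega>\<^sub>1" "antitriangular \<omega>\<^sub>2" using \<omega> OmegaF_antitriangular by blast+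
    ultimately show "connected_component_set (OmegaF n F) \<omega>\<^sub>1 = connected_component_set (OmegaF n F) \<omega>\<^sub>2"
      using orient_tuple_eq_iff by (simp add: connected_component_OmegaF_eq sign_class_def)
  qed
  moreover have "?G ` ?Comps = orient_tuple ` Collect antitriangular"
  proof
    show "?G ` ?Comps \<subseteq> orient_tuple ` Collect antitriangular"
      using orient_tuple_component by (auto simp: OmegaF_eq)
    show "orient_tuple ` Collect antitriangular \<subseteq> ?G ` ?Comps"
    proof
      fix X assume "X \<in> orient_tuple ` Collect antitriangular"
      then obtain \<omega> where \<omega>: "\<omega> \<in> OmegaF n F" "X = orient_tuple \<omega>" by (auto simp: OmegaF_eq)
      then have "X = ?G (connected_component_set (OmegaF n F) \<omega>)" using orient_tuple_component by simp
      moreover have "connected_component_set (OmegaF n F) \<omega> \<in> ?Comps" using \<omega>(1) by blast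
      ultimately show "X \<in> ?G ` ?Comps" by blast
    qed
  qed
  moreover have "orient_tuple ` Collect antitriangular = (\<Pi>\<^sub>E j\<in>{..<n}. orientations (F (2*n - j)) (F j))"
    using orient_tuple_in_PiE orient_tuple_surj by (auto simp: image_iff) metis
  ultimately show ?thesis unfolding bij_betw_def by simp
qed

end

theorem lemma3p9:
  fixes n :: nat and F :: "nat \<Rightarrow> 'v::euclidean_space set"
  assumes "DIM('v) = 2 * n"
    and "full_flag n F"
  shows "(\<exists>G. bij_betw G {connected_component_set (OmegaF n F) \<omega> | \<omega>. \<omega> \<in> OmegaF n F}
                 (\<Pi>\<^sub>E j\<in>{..<n}. orientations (F (2*n - j)) (F j))
           \<and> (\<forall>\<omega>\<in>OmegaF n F. G (connected_component_set (OmegaF n F) \<omega>)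
                 = (\<lambda>j\<in>{..<n}. induced_orient \<omega> (F (2*n - j)) (F j))))
     \<and> (\<forall>\<omega>\<in>OmegaF n F. convex_forms (connected_component_set (OmegaF n F) \<omega>))"
proof -
  obtain e where "adapted_basis n F e" using adapted_basis_exists[OF assms] .
  then interpret adapted_basis n F e .
  have "bij_betw (\<lambda>C. orient_tuple (SOME \<omega>. \<omega> \<in> C))
      {connected_component_set (OmegaF n F) \<omega> | \<omega>. \<omega> \<in> OmegaF n F}
      (\<Pi>\<^sub>E j\<in>{..<n}. orientations (F (2*n - j)) (F j))"
    by (rule components_orient_tuple_bij)
  moreover have "\<forall>\<omega>\<in>OmegaF n F. orient_tuple (SOME \<omega>'. \<omega>' \<in> connected_component_set (OmegaF n F) \<omega>)
      = (\<lambda>j\<in>{..<n}. induced_orient \<omega> (F (2*n - j)) (F j))"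
    using orient_tuple_component unfolding orient_tuple_def by blast
  moreover have "\<forall>\<omega>\<in>OmegaF n F. convex_forms (connected_component_set (OmegaF n F) \<omega>)"
    using connected_component_OmegaF_eq OmegaF_antitriangular convex_forms_sign_class by simp
  ultimately show ?thesis by blast
qed

end
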